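(* Let $1<\alpha<2$, let $\{S_\alpha(t)\}_{t\ge0}$ be an $\alpha$-times resolvent family on a Banach space $X$ with generator $A$, let $r>0$, and suppose $S_\alpha(\cdot)$ is of bounded semivariation on $[0,r]$. If $f\in C([0,r];X)$, then for every $t\in[0,r]$, $(P_\alpha*f)(t)\in D(A)$ and $$A(P_\alpha*f)(t)=-\int_0^t d_s[S_\alpha(t-s)]f(s),$$ where the right-hand side is a Riemann–Stieltjes integral.
   Context: For $\beta>0$ let $g_\beta(t)=\frac{t^{\beta-1}}{\Gamma(\beta)}$ for $t>0$, and $(g_\beta*f)(t)=\int_0^tg_\beta(t-s)f(s)\,ds$. Let $A$ be a closed, densely defined linear operator on $X$. A family $\{S_\alpha(t)\}_{t\ge0}$ of bounded operators is an $\alpha$-times resolvent family generated by $A$ if: (i) it is strongly continuous on $[0,\infty)$ with $S_\alpha(0)=I$; (ii) $S_\alpha(t)D(A)\subset D(A)$ and $AS_\alpha(t)x=S_\alpha(t)Ax$ for $x\in D(A)$; (iii) $S_\alpha(t)x=x+(g_\alpha*S_\alpha)(t)Ax$ for $x\in D(A)$, $t\ge0$. Define $P_\alpha(t)x=\int_0^tg_{\alpha-1}(t-s)S_\alpha(s)x\,ds$ and $(P_\alpha*f)(t)=\int_0^tP_\alpha(t-s)f(s)\,ds$. For $G:[a,b]\to B(X)$ and a subdivision $d: a=d_0<d_1<\dots<d_n=b$, let $SV_d[G]=\sup\{\|\sum_{i=1}^n[G(d_i)-G(d_{i-1})]x_i\|: x_i\in X,\ \|x_i\|\le1\}$ and $SV[G]=\sup_d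 SV_d[G]$ over all subdivisions; $G$ is of bounded semivariation on $[a,b]$ if $SV[G]<\infty$. *)

theory Defs
  imports "HOL-Analysis.Analysis"
begin

definition gkern :: "real \<Rightarrow> real \<Rightarrow> real" where
  "gkern \<beta> t = (if t > 0 then t powr (\<beta> - 1) / Gamma \<beta> else 0)"

definition closed_densely_defined :: "'a::banach set \<Rightarrow> ('a \<Rightarrow> 'a) \<Rightarrow> bool" where
  "closed_densely_defined D A \<longleftrightarrow>
     subspace D \<and>
     (\<forall>x\<in>D. \<forall>y\<in>D. A (x + y) = A x + A y) \<and>
     (\<forall>c. \<forall>x\<in>D. A (c *\<^sub>R x) = c *\<^sub>R A x) \<and>
     closed {(x, A x) | x. x \<in> D} \<and>
     closure D = UNIV"

definition resolvent_family ::
  "real \<Rightarrow> 'a::banach set \<Rightarrow> ('a \<Rightarrow> 'a) \<Rightarrow> (real \<Rightarrow> 'a \<Rightarrow>\<^sub>L 'a) \<Rightarrow> bool" where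
  "resolvent_family \<alpha> D A S \<longleftrightarrow>
     (\<forall>x. continuous_on {0..} (\<lambda>t. blinfun_apply (S t) x)) \<and>
     S 0 = id_blinfun \<and>
     (\<forall>t\<ge>0. \<forall>x\<in>D. S t x \<in> D \<and> A (S t x) = S t (A x)) \<and>
     (\<forall>t\<ge>0. \<forall>x\<in>D. S t x = x + integral {0..t} (\<lambda>s. gkern \<alpha> (t - s) *\<^sub>R S s (A x)))"

definition Pop :: "real \<Rightarrow> (real \<Rightarrow> 'a::banach \<Rightarrow>\<^sub>L 'a) \<Rightarrow> real \<Rightarrow> 'a \<Rightarrow> 'a" where
  "Pop \<alpha> S t x = integral {0..t} (\<lambda>s. gkern (\<alpha> - 1) (t - s) *\<^sub>R S s x)"

definition Pconv :: "real \<Rightarrow> (real \<Rightarrow> 'a::banach \<Rightarrow>\<^sub>L 'a) \<Rightarrow> (real \<Rightarrow> 'a) \<Rightarrow> real \<Rightarrow> 'a" where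
  "Pconv \<alpha> S f t = integral {0..t} (\<lambda>s. Pop \<alpha> S (t - s) (f s))"

definition subdivision :: "real \<Rightarrow> real \<Rightarrow> nat \<Rightarrow> (nat \<Rightarrow> real) \<Rightarrow> bool" where
  "subdivision a b n d \<longleftrightarrow> d 0 = a \<and> d n = b \<and> (\<forall>i<n. d i < d (Suc i))"

definition bounded_semivariation :: "(real \<Rightarrow> 'a::banach \<Rightarrow>\<^sub>L 'a) \<Rightarrow> real \<Rightarrow> real \<Rightarrow> bool" where
  "bounded_semivariation G a b \<longleftrightarrow>
     (\<exists>M. \<forall>n d xs. subdivision a b n d \<and> (\<forall>i<n. norm (xs i) \<le> 1) \<longrightarrow>
        norm (\<Sum>i<n. (G (d (Suc i)) - G (d i)) (xs i)) \<le> M)"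

definition RS_has_integral ::
  "(real \<Rightarrow> 'a::banach \<Rightarrow>\<^sub>L 'a) \<Rightarrow> (real \<Rightarrow> 'a) \<Rightarrow> real \<Rightarrow> real \<Rightarrow> 'a \<Rightarrow> bool" where
  "RS_has_integral G f a b I \<longleftrightarrow>
     (\<forall>\<epsilon>>0. \<exists>\<delta>>0. \<forall>n d \<xi>.
        subdivision a b n d \<and> (\<forall>i<n. d i \<le> \<xi> i \<and> \<xi> i \<le> d (Suc i)) \<and>
        (\<forall>i<n. d (Suc i) - d i < \<delta>) \<longrightarrow>
        norm ((\<Sum>i<n. (G (d (Suc i)) - G (d i)) (f (\<xi> i))) - I) < \<epsilon>)"

end

theory Submission
  imports Defs
begin

text \<open>
  The proof rests
  on the identity \<open>\<integral>\<^sub>a\<^sup>c P\<^sub>\<alpha>(t - s) x ds \<in> D(A)\<close> with \<open>A\<close>-image \<open>S(t - a) x - S(t - c) x\<close>.  Freezing \<open>f\<close>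
  at the tags of a subdivision of \<open>[0, t]\<close> therefore gives approximations of \<open>(P\<^sub>\<alpha> * f)(t)\<close>
  that lie in \<open>D(A)\<close> and are mapped by \<open>A\<close> to minus Riemann--Stieltjes sums of \<open>S(t - \<cdot>)\<close>
  against \<open>f\<close>; closedness of \<open>A\<close> lets us pass to the limit.
\<close>

section \<open>The Riemann--Liouville kernel\<close>

lemma gkern_nonneg: "0 < b \<Longrightarrow> 0 \<le> gkern b w"
  by (simp add: gkern_def Gamma_real_pos less_imp_le)

text \<open>For \<open>b > 1\<close> the kernel is \<open>(max w 0) powr (b - 1) / Gamma b\<close>, a continuous function.\<close>
lemma gkern_continuous:
  assumes b: "1 < b"
  shows "continuous_on S (gkern b)"
proof -
  have "gkern b = (\<lambda>w. max w 0 powr (b - 1) / Gamma b)"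
    using b by (auto simp: fun_eq_iff gkern_def max_def)
  moreover have "Gamma b \<noteq> 0"
    using b Gamma_real_pos[of b] by linarith
  ultimately show ?thesis
    using b by (auto intro!: continuous_intros continuous_on_powr')
qed

lemma gkern_mono: "1 \<le> b \<Longrightarrow> 0 \<le> x \<Longrightarrow> x \<le> y \<Longrightarrow> gkern b x \<le> gkern b y"
  unfolding gkern_def
  by (auto intro!: divide_right_mono powr_mono2 simp: Gamma_real_pos less_imp_le)

lemma gkern_has_integral:
  assumes b: "0 < b" and x: "0 \<le> x"
  shows "(gkern b has_integral gkern (b + 1) x) {0..x}"
proof -
  define F where "F v = v powr b / Gamma (b + 1)" for v
  have Gamma_succ: "Gamma (b + 1) = b * Gamma b"
    using b by (subst Gamma_plus1) (auto simp: nonpos_Ints_def)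
  have Gamma_pos: "Gamma b > 0" "Gamma (b + 1) > 0"
    using b by (simp_all add: Gamma_real_pos)
  have "(gkern b has_integral (F x - F 0)) {0..x}"
  proof (rule fundamental_theorem_of_calculus_interior_strong[of "{}"])
    show "continuous_on {0..x} F"
      unfolding F_def using b Gamma_pos(2)[THEN less_imp_neq]
      by (intro continuous_on_divide continuous_on_powr' continuous_on_const continuous_on_id) auto
    fix v assume v: "v \<in> {0<..<x} - {}"
    have "(F has_real_derivative (b * v powr (b - 1)) / Gamma (b + 1)) (at v)"
      unfolding F_def using v Gamma_pos(2) by (auto intro!: derivative_eq_intros DERIV_powr)
    moreover have "(b * v powr (b - 1)) / Gamma (b + 1) = gkern b v"
      using v b Gamma_pos by (simp add: gkern_def Gamma_succ)
    ultimately show "(F has_vector_derivative gkern b v) (at v)"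
      by (simp add: has_real_derivative_iff_has_vector_derivative)
  qed (use x in auto)
  moreover have "F x - F 0 = gkern (b + 1) x"
    using x b by (auto simp: F_def gkern_def)
  ultimately show ?thesis by simp
qed

text \<open>The approximation errors below are multiples of \<open>g\<^sub>b\<^sub>+\<^sub>1(1/n)\<close>, which tends to \<open>0\<close>.\<close>
lemma gkern_at_inverse_tendsto:
  assumes b: "0 < b"
  shows "(\<lambda>n. gkern (b + 1) (1 / real n)) \<longlonglongrightarrow> 0"
proof -
  have "(\<lambda>n. real n powr (- b) / Gamma (b + 1)) \<longlonglongrightarrow> 0"
    using b by (intro tendsto_divide_zero tendsto_neg_powr filterlim_real_sequentially) auto
  moreover have "\<forall>\<^sub>F n in sequentially. real n powr (- b) / Gamma (b + 1) = gkern (b + 1) (1 / real n)"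
    using eventually_gt_at_top[of 0]
    by eventually_elim (simp add: gkern_def powr_minus_divide powr_divide)
  ultimately show ?thesis by (rule Lim_transform_eventually)
qed

lemma has_integral_reflect_shift:
  fixes \<phi> :: "real \<Rightarrow> 'a::real_normed_vector"
  shows "((\<lambda>s. \<phi> (t - s)) has_integral I) {a..c} \<longleftrightarrow> (\<phi> has_integral I) {t - c..t - a}"
proof -
  have "((\<lambda>s. \<phi> (t - s)) has_integral I) {a..c} \<longleftrightarrow> ((\<lambda>x. \<phi> (t + x)) has_integral I) {- c..- a}"
    using has_integral_reflect_real[where f="\<lambda>s. \<phi> (t - s)" and a=a and b=c] by simp
  also have "\<dots> \<longleftrightarrow> (\<phi> has_integral I) {t - c..t - a}"
    using has_integral_shift_cbox_iff[of \<phi> t I "- c" "- a"] by (simp add: o_def)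
  finally show ?thesis .
qed

lemma integral_reflect_shift:
  fixes \<phi> :: "real \<Rightarrow> 'a::real_normed_vector"
  shows "integral {a..c} (\<lambda>s. \<phi> (t - s)) = integral {t - c..t - a} \<phi>"
  by (metis has_integral_reflect_shift integrable_integral integral_unique not_integrable_integral
      integrable_on_def)

lemma integral_diff_norm_le:
  fixes f g :: "real \<Rightarrow> 'a::banach"
  assumes f: "f integrable_on {a..b}" and g: "g integrable_on {a..b}" and ab: "a \<le> b"
    and bound: "\<And>x. x \<in> {a..b} \<Longrightarrow> norm (f x - g x) \<le> B"
  shows "norm (integral {a..b} f - integral {a..b} g) \<le> (b - a) * B"
proof -
  have "((\<lambda>x. f x - g x) has_integral integral {a..b} f - integral {a..b} g) (cbox a b)"
    using has_integral_diff[OF integrable_integral[OF f] integrable_integral[OF g]] by simp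
  moreover have "0 \<le> B"
    using bound[of a] ab by (meson atLeastAtMost_iff norm_ge_zero order_refl order_trans)
  ultimately show ?thesis
    using has_integral_bound[of B "\<lambda>x. f x - g x"] bound ab by (force simp: mult.commute)
qed

section \<open>Riemann--Liouville fractional integrals\<close>

text \<open>The fractional integral \<open>(g\<^sub>b * h)(u) = \<integral>\<^sub>0\<^sup>u g\<^sub>b(u - v) h(v) dv\<close>; both \<open>P\<^sub>\<alpha>\<close> (order
  \<open>\<alpha> - 1\<close>) and the resolvent identity (order \<open>\<alpha>\<close>) are instances of it.\<close>
definition frac_integral :: "real \<Rightarrow> (real \<Rightarrow> 'a::real_normed_vector) \<Rightarrow> real \<Rightarrow> 'a" where
  "frac_integral b h u = integral {0..u} (\<lambda>v. gkern b (u - v) *\<^sub>R h v)"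

text \<open>Change of variables \<open>z = (u - v)\<^sup>b\<close>, which removes the singularity of the kernel at
  \<open>v = u\<close> when \<open>b < 1\<close>.\<close>
lemma singular_substitution:
  fixes h :: "real \<Rightarrow> 'a::banach"
  assumes b: "0 < b" and au: "a \<le> u" and h: "continuous_on {a..u} h"
  shows "((\<lambda>v. (b * (u - v) powr (b - 1)) *\<^sub>R h v)
           has_integral integral {0..(u - a) powr b} (\<lambda>z. h (u - z powr (1 / b)))) {a..u}"
proof -
  define c where "c = (u - a) powr b"
  define k where "k z = h (u - z powr (1 / b))" for z
  define H where "H y = integral {0..y} k" for y
  have root_range: "u - z powr (1 / b) \<in> {a..u}" if "z \<in> {0..c}" for z
  proof -
    have "z powr (1 / b) \<le> c powr (1 / b)" using that b by (intro powr_mono2) auto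
    also have "\<dots> = u - a" using au b by (simp add: c_def powr_powr)
    finally show ?thesis by simp
  qed
  have k_cont: "continuous_on {0..c} k"
    unfolding k_def using b root_range
    by (intro continuous_on_compose2[OF h] continuous_intros continuous_on_powr') auto
  have H_cont: "continuous_on {0..c} H"
    unfolding H_def by (intro indefinite_integral_continuous_1 integrable_continuous_real k_cont)
  have pow_range: "(u - v) powr b \<in> {0..c}" if "v \<in> {a..u}" for v
    using that b by (auto simp: c_def intro!: powr_mono2)
  define \<Phi> where "\<Phi> v = H ((u - v) powr b)" for v
  have "((\<lambda>v. - ((b * (u - v) powr (b - 1)) *\<^sub>R h v)) has_integral (\<Phi> u - \<Phi> a)) {a..u}"
  proof (rule fundamental_theorem_of_calculus_interior_strong[of "{}"])
    show "continuous_on {a..u} \<Phi>"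
      unfolding \<Phi>_def using b pow_range by (intro continuous_on_compose2[OF H_cont] continuous_intros continuous_on_powr') auto
    fix v assume v: "v \<in> {a<..<u} - {}"
    define y where "y = (u - v) powr b"
    have y: "0 < y" "y < c" using v b by (auto simp: y_def c_def intro!: powr_less_mono2)
    have "((\<lambda>v. (u - v) powr b) has_real_derivative (b * (u - v) powr (b - 1) * (0 - 1))) (at v)"
      using v by (intro derivative_eq_intros DERIV_powr) auto
    then have inner: "((\<lambda>v. (u - v) powr b) has_vector_derivative - (b * (u - v) powr (b - 1))) (at v)"
      by (simp add: has_real_derivative_iff_has_vector_derivative)
    have "(H has_vector_derivative k y) (at y within {0..c})"
      unfolding H_def using y by (intro integral_has_vector_derivative k_cont) auto
    then have outer: "(H has_vector_derivative k y) (at y)"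
      using y by (simp add: at_within_Icc_at)
    have "k y = h v" using v b by (simp add: k_def y_def powr_powr)
    then show "(\<Phi> has_vector_derivative - ((b * (u - v) powr (b - 1)) *\<^sub>R h v)) (at v)"
      using vector_diff_chain_at[OF inner, of H] outer by (simp add: \<Phi>_def[abs_def] y_def o_def)
  qed (use au in auto)
  moreover have "\<Phi> u - \<Phi> a = - integral {0..c} k"
    using b by (simp add: \<Phi>_def H_def c_def)
  ultimately show ?thesis
    by (simp add: has_integral_neg_iff k_def[abs_def] c_def)
qed

lemma frac_integrand_integrable:
  fixes h :: "real \<Rightarrow> 'a::banach"
  assumes b: "0 < b" and au: "a \<le> u" and h: "continuous_on {a..u} h"
  shows "(\<lambda>v. gkern b (u - v) *\<^sub>R h v) integrable_on {a..u}"
proof -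
  have "(\<lambda>v. (1 / (b * Gamma b)) *\<^sub>R ((b * (u - v) powr (b - 1)) *\<^sub>R h v)) integrable_on {a..u}"
    using singular_substitution[OF assms] by (intro integrable_cmul) (auto simp: integrable_on_def)
  moreover have "(1 / (b * Gamma b)) *\<^sub>R ((b * (u - v) powr (b - 1)) *\<^sub>R h v) = gkern b (u - v) *\<^sub>R h v"
    if "v \<in> {a..u}" for v
    using b that Gamma_real_pos[of b] by (auto simp: gkern_def)
  ultimately show ?thesis
    by (rule integrable_eq)
qed

lemma frac_integral_norm_le:
  fixes h :: "real \<Rightarrow> 'a::banach"
  assumes b: "0 < b" and u: "0 \<le> u" and h: "continuous_on {0..u} h"
    and bound: "\<And>v. v \<in> {0..u} \<Longrightarrow> norm (h v) \<le> M"
  shows "norm (frac_integral b h u) \<le> M * gkern (b + 1) u"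
proof -
  have g: "((\<lambda>v. gkern b (u - v)) has_integral gkern (b + 1) u) {0..u}"
    using gkern_has_integral[OF b u] by (simp add: has_integral_reflect_shift)
  have "norm (frac_integral b h u) \<le> integral {0..u} (\<lambda>v. gkern b (u - v) * M)"
    unfolding frac_integral_def
  proof (rule integral_norm_bound_integral)
    show "(\<lambda>v. gkern b (u - v) *\<^sub>R h v) integrable_on {0..u}"
      by (rule frac_integrand_integrable[OF b u h])
    show "(\<lambda>v. gkern b (u - v) * M) integrable_on {0..u}"
      using g by (intro integrable_on_mult_left) (auto simp: integrable_on_def)
  qed (use bound gkern_nonneg[OF b] in \<open>auto intro: mult_left_mono\<close>)
  also have "\<dots> = gkern (b + 1) u * M"
    using integral_unique[OF g] by simp
  finally show ?thesis by (simp add: mult.commute)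
qed

lemma frac_integral_diff:
  fixes h k :: "real \<Rightarrow> 'a::banach"
  assumes b: "0 < b" and u: "0 \<le> u" and h: "continuous_on {0..u} h" and k: "continuous_on {0..u} k"
  shows "frac_integral b (\<lambda>v. h v - k v) u = frac_integral b h u - frac_integral b k u"
  unfolding frac_integral_def scaleR_diff_right
  by (intro integral_diff frac_integrand_integrable b u h k)

section \<open>Approximation of the singular kernel by continuous kernels\<close>

text \<open>For \<open>0 < b < 1\<close> the kernel \<open>g\<^sub>b\<close> is unbounded near \<open>0\<close>.\<close>
definition cutoff_kernel :: "real \<Rightarrow> nat \<Rightarrow> real \<Rightarrow> real" where
  "cutoff_kernel b n w = max w (1 / real n) powr (b - 1) / Gamma b * min 1 (max 0 (real n * w))"

lemma cutoff_kernel_continuous: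
  assumes n: "0 < n" and b: "0 < b"
  shows "continuous_on S (cutoff_kernel b n)"
proof -
  have "Gamma b \<noteq> 0"
    using b Gamma_real_pos[of b] by linarith
  moreover have "\<forall>w\<in>S. max w (1 / real n) \<noteq> 0"
    using n by (metis max.strict_coboundedI2 of_nat_0_less_iff order_less_irrefl zero_less_divide_1_iff)
  ultimately show ?thesis
    unfolding cutoff_kernel_def[abs_def]
    by (intro continuous_intros continuous_on_powr) auto
qed

lemma cutoff_kernel_nonpos: "w \<le> 0 \<Longrightarrow> cutoff_kernel b n w = 0"
  by (simp add: cutoff_kernel_def mult_nonneg_nonpos)

lemma cutoff_kernel_eq:
  assumes n: "0 < n" and w: "1 / real n \<le> w"
  shows "cutoff_kernel b n w = gkern b w"
proof -
  have "0 < w"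
    using n w by (meson dual_order.strict_trans1 of_nat_0_less_iff zero_less_divide_1_iff)
  moreover have "1 \<le> real n * w"
    using n w by (simp add: field_simps)
  ultimately show ?thesis
    using w by (simp add: cutoff_kernel_def gkern_def max_absorb1)
qed

lemma cutoff_kernel_bounds:
  assumes n: "0 < n" and b: "0 < b" "b \<le> 1"
  shows "0 \<le> cutoff_kernel b n w \<and> cutoff_kernel b n w \<le> gkern b w"
proof (cases "w \<le> 0 \<or> 1 / real n \<le> w")
  case True
  then show ?thesis
    using cutoff_kernel_nonpos cutoff_kernel_eq[OF n] b
    by (auto simp: gkern_def Gamma_real_pos less_imp_le)
next
  case False
  then have w: "0 < w" "w < 1 / real n" by auto
  let ?c = "min 1 (max 0 (real n * w))"
  have "(1 / real n) powr (b - 1) * ?c \<le> (1 / real n) powr (b - 1)"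
    by (simp add: mult_left_le)
  also have "\<dots> \<le> w powr (b - 1)"
    using w b by (intro powr_mono2') auto
  finally have "(1 / real n) powr (b - 1) * ?c / Gamma b \<le> w powr (b - 1) / Gamma b"
    using b by (intro divide_right_mono) (auto simp: Gamma_real_pos less_imp_le)
  then show ?thesis
    using w b by (simp add: cutoff_kernel_def gkern_def max_absorb2 Gamma_real_pos less_imp_le)
qed

lemma cutoff_deficit:
  assumes n: "0 < n" and b: "0 < b" "b \<le> 1" and x: "0 \<le> x"
  shows "(\<lambda>w. gkern b w - cutoff_kernel b n w) integrable_on {0..x}"
    and "0 \<le> integral {0..x} (\<lambda>w. gkern b w - cutoff_kernel b n w)"
    and "integral {0..x} (\<lambda>w. gkern b w - cutoff_kernel b n w) \<le> gkern (b + 1) (1 / real n)"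
proof -
  let ?d = "\<lambda>w. gkern b w - cutoff_kernel b n w"
  have g_int: "gkern b integrable_on {0..y}" if "0 \<le> y" for y
    using gkern_has_integral[OF b(1) that] by blast
  have d_int: "?d integrable_on {0..y}" if "0 \<le> y" for y
    by (intro integrable_diff g_int that integrable_continuous_real cutoff_kernel_continuous n b(1))
  show "?d integrable_on {0..x}"
    using d_int x .
  have d_bounds: "0 \<le> ?d w" "?d w \<le> gkern b w" for w
    using cutoff_kernel_bounds[OF n b, of w] by auto
  show "0 \<le> integral {0..x} ?d"
    by (intro integral_nonneg d_int x) (use d_bounds in auto)
  define m where "m = min x (1 / real n)"
  have m: "0 \<le> m" "m \<le> x"
    using x n by (auto simp: m_def)
  have tail: "integral {m..x} ?d = 0"
  proof (cases "m = x")
    case False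
    then have "integral {m..x} ?d = integral {m..x} (\<lambda>_. 0)"
      using cutoff_kernel_eq[OF n] by (intro integral_cong) (auto simp: m_def)
    then show ?thesis
      by simp
  qed simp
  have "integral {0..x} ?d = integral {0..m} ?d"
    using Henstock_Kurzweil_Integration.integral_combine[OF m d_int[OF x]] tail by simp
  also have "\<dots> \<le> integral {0..m} (gkern b)"
    by (intro integral_le d_int g_int m) (use d_bounds in auto)
  also have "\<dots> = gkern (b + 1) m"
    using gkern_has_integral[OF b(1) m(1)] by (rule integral_unique)
  also have "\<dots> \<le> gkern (b + 1) (1 / real n)"
    using m b by (intro gkern_mono) (auto simp: m_def)
  finally show "integral {0..x} ?d \<le> gkern (b + 1) (1 / real n)" .
qed

text \<open>The fractional integral with the kernel replaced by its cut-off.  Integrating over the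
  whole of \<open>[0, T]\<close> rather than \<open>[0, u]\<close> makes continuity in \<open>u\<close> evident.\<close>
definition cutoff_integral :: "real \<Rightarrow> nat \<Rightarrow> real \<Rightarrow> (real \<Rightarrow> 'a::real_normed_vector) \<Rightarrow> real \<Rightarrow> 'a"
  where "cutoff_integral b n T h u = integral {0..T} (\<lambda>v. cutoff_kernel b n (u - v) *\<^sub>R h v)"

lemma cutoff_integral_continuous:
  fixes h :: "real \<Rightarrow> 'a::banach"
  assumes n: "0 < n" and b: "0 < b" and h: "continuous_on {0..T} h"
  shows "continuous_on {0..T} (cutoff_integral b n T h)"
proof -
  have "continuous_on ({0..T} \<times> cbox 0 T) (\<lambda>(u, v). cutoff_kernel b n (u - v) *\<^sub>R h v)"
    unfolding case_prod_beta
    by (intro continuous_intros continuous_on_compose2[OF cutoff_kernel_continuous[OF n b]]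
        continuous_on_compose2[OF h]) auto
  from integral_continuous_on_param[OF this] show ?thesis
    by (simp add: cutoff_integral_def[abs_def])
qed

text \<open>Since the cut-off kernel vanishes on \<open>(-\<infinity>, 0]\<close>, only \<open>[0, u]\<close> contributes.\<close>
lemma cutoff_integral_eq:
  fixes h :: "real \<Rightarrow> 'a::banach"
  assumes n: "0 < n" and b: "0 < b" and u: "0 \<le> u" "u \<le> T" and h: "continuous_on {0..T} h"
  shows "cutoff_integral b n T h u = integral {0..u} (\<lambda>v. cutoff_kernel b n (u - v) *\<^sub>R h v)"
proof -
  have int: "(\<lambda>v. cutoff_kernel b n (u - v) *\<^sub>R h v) integrable_on {0..T}"
    by (intro integrable_continuous_real continuous_intros h
        continuous_on_compose2[OF cutoff_kernel_continuous[OF n b]]) auto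
  have "cutoff_integral b n T h u = integral {0..u} (\<lambda>v. cutoff_kernel b n (u - v) *\<^sub>R h v)
        + integral {u..T} (\<lambda>v. cutoff_kernel b n (u - v) *\<^sub>R h v)"
    unfolding cutoff_integral_def using Henstock_Kurzweil_Integration.integral_combine[OF u int] by simp
  also have "integral {u..T} (\<lambda>v. cutoff_kernel b n (u - v) *\<^sub>R h v) = 0"
    by (subst integral_cong[where g="\<lambda>_. 0"]) (auto simp: cutoff_kernel_nonpos)
  finally show ?thesis
    by simp
qed

lemma cutoff_integral_approx:
  fixes h :: "real \<Rightarrow> 'a::banach"
  assumes n: "0 < n" and b: "0 < b" "b \<le> 1" and u: "0 \<le> u" "u \<le> T"
    and h: "continuous_on {0..T} h" and bound: "\<And>v. v \<in> {0..T} \<Longrightarrow> norm (h v) \<le> M"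
  shows "norm (frac_integral b h u - cutoff_integral b n T h u) \<le> M * gkern (b + 1) (1 / real n)"
proof -
  let ?d = "\<lambda>w. gkern b w - cutoff_kernel b n w"
  have hu: "continuous_on {0..u} h"
    by (rule continuous_on_subset[OF h]) (use u in auto)
  have "0 \<in> {0..T}"
    using u by simp
  from bound[OF this] have M: "0 \<le> M"
    by (rule order_trans[OF norm_ge_zero])
  have cut_int: "(\<lambda>v. cutoff_kernel b n (u - v) *\<^sub>R h v) integrable_on {0..u}"
    by (intro integrable_continuous_real continuous_intros hu
        continuous_on_compose2[OF cutoff_kernel_continuous[OF n b(1)]]) auto
  have d_refl: "((\<lambda>v. ?d (u - v)) has_integral integral {0..u} ?d) {0..u}"
    using has_integral_reflect_shift[of ?d u "integral {0..u} ?d" 0 u]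
      integrable_integral[OF cutoff_deficit(1)[OF n b u(1)]] by simp
  have "frac_integral b h u - cutoff_integral b n T h u = integral {0..u} (\<lambda>v. ?d (u - v) *\<^sub>R h v)"
    unfolding cutoff_integral_eq[OF n b(1) u h] frac_integral_def scaleR_diff_left
    by (intro integral_diff[symmetric] frac_integrand_integrable[OF b(1) u(1) hu] cut_int)
  also have "norm \<dots> \<le> integral {0..u} (\<lambda>v. ?d (u - v) * M)"
  proof (rule integral_norm_bound_integral)
    show "(\<lambda>v. ?d (u - v) *\<^sub>R h v) integrable_on {0..u}"
      using frac_integrand_integrable[OF b(1) u(1) hu] cut_int
      by (simp add: scaleR_diff_left integrable_diff)
    show "(\<lambda>v. ?d (u - v) * M) integrable_on {0..u}"
      using d_refl by (intro integrable_on_mult_left) (auto simp: integrable_on_def)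
    fix v assume "v \<in> {0..u}"
    then show "norm (?d (u - v) *\<^sub>R h v) \<le> ?d (u - v) * M"
      using bound[of v] u cutoff_kernel_bounds[OF n b, of "u - v"] by (auto intro: mult_left_mono)
  qed
  also have "\<dots> = integral {0..u} ?d * M"
    using integral_unique[OF d_refl] by simp
  also have "\<dots> \<le> gkern (b + 1) (1 / real n) * M"
    using cutoff_deficit(3)[OF n b u(1)] M by (intro mult_right_mono)
  finally show ?thesis
    by (simp add: mult.commute)
qed

text \<open>Uniform limits of the continuous cut-off integrals: fractional integrals of continuous
  functions are continuous.\<close>
lemma frac_integral_continuous:
  fixes h :: "real \<Rightarrow> 'a::banach"
  assumes b: "0 < b" "b \<le> 1" and h: "continuous_on {0..T} h"
  shows "continuous_on {0..T} (frac_integral b h)"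
proof (rule uniform_limit_theorem[where f="\<lambda>n. cutoff_integral b n T h" and F=sequentially])
  show "\<forall>\<^sub>F n in sequentially. continuous_on {0..T} (cutoff_integral b n T h)"
    using eventually_gt_at_top[of 0]
    by eventually_elim (use cutoff_integral_continuous b h in auto)
  obtain M where M: "0 \<le> M" "\<And>v. v \<in> {0..T} \<Longrightarrow> norm (h v) \<le> M"
    using continuous_on_compact_bound[OF compact_Icc h] by blast
  have M1: "\<And>v. v \<in> {0..T} \<Longrightarrow> norm (h v) \<le> M + 1"
    by (intro order_trans[OF M(2)]) auto
  show "uniform_limit {0..T} (\<lambda>n. cutoff_integral b n T h) (frac_integral b h) sequentially"
    unfolding uniform_limit_iff
  proof (intro allI impI)
    fix e :: real assume e: "0 < e"
    have "(\<lambda>n. (M + 1) * gkern (b + 1) (1 / real n)) \<longlonglongrightarrow> 0"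
      by (intro tendsto_mult_right_zero gkern_at_inverse_tendsto b)
    then have "\<forall>\<^sub>F n in sequentially. (M + 1) * gkern (b + 1) (1 / real n) < e"
      using e by (rule order_tendstoD)
    with eventually_gt_at_top[of 0]
    show "\<forall>\<^sub>F n in sequentially. \<forall>u\<in>{0..T}. dist (cutoff_integral b n T h u) (frac_integral b h u) < e"
    proof eventually_elim
      case (elim n)
      show ?case
      proof
        fix u assume "u \<in> {0..T}"
        then have "norm (frac_integral b h u - cutoff_integral b n T h u)
                   \<le> (M + 1) * gkern (b + 1) (1 / real n)"
          using elim(1) by (intro cutoff_integral_approx[OF _ b _ _ h M1]) auto
        then show "dist (cutoff_integral b n T h u) (frac_integral b h u) < e"
          using elim(2) by (simp add: dist_norm norm_minus_commute)
      qed
    qed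
  qed
qed simp

lemma cutoff_kernel_mass:
  assumes n: "0 < n" and b: "0 < b" "b \<le> 1" and v: "0 \<le> v" "v \<le> \<tau>"
  shows "\<bar>integral {0..\<tau>} (\<lambda>u. cutoff_kernel b n (u - v)) - gkern (b + 1) (\<tau> - v)\<bar>
           \<le> gkern (b + 1) (1 / real n)"
proof -
  let ?k = "cutoff_kernel b n"
  have k_int: "(\<lambda>u. ?k (u - v)) integrable_on {0..\<tau>}"
    by (intro integrable_continuous_real continuous_on_compose2[OF cutoff_kernel_continuous[OF n b(1)]]
        continuous_intros) auto
  have "integral {0..\<tau>} (\<lambda>u. ?k (u - v)) = integral {0..v} (\<lambda>u. ?k (u - v)) + integral {v..\<tau>} (\<lambda>u. ?k (u - v))"
    using Henstock_Kurzweil_Integration.integral_combine[OF v k_int] by simp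
  also have "integral {0..v} (\<lambda>u. ?k (u - v)) = 0"
    by (subst integral_cong[where g="\<lambda>_. 0"]) (auto simp: cutoff_kernel_nonpos)
  also have "integral {v..\<tau>} (\<lambda>u. ?k (u - v)) = integral {0..\<tau> - v} ?k"
    using integral_shift_real_ivl[of 0 "- v" "\<tau> - v" ?k] by simp
  finally have "gkern (b + 1) (\<tau> - v) - integral {0..\<tau>} (\<lambda>u. ?k (u - v))
      = integral {0..\<tau> - v} (gkern b) - integral {0..\<tau> - v} ?k"
    using integral_unique[OF gkern_has_integral[OF b(1), of "\<tau> - v"]] v by simp
  also have "\<dots> = integral {0..\<tau> - v} (\<lambda>w. gkern b w - ?k w)"
  proof (rule integral_diff[symmetric])
    show "gkern b integrable_on {0..\<tau> - v}"
      using gkern_has_integral[OF b(1), of "\<tau> - v"] v by (auto simp: integrable_on_def)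
    show "?k integrable_on {0..\<tau> - v}"
      by (intro integrable_continuous_real cutoff_kernel_continuous n b(1))
  qed
  finally show ?thesis
    using cutoff_deficit(2,3)[OF n b, of "\<tau> - v"] v by simp
qed

lemma integral_swap_kernel:
  fixes h :: "real \<Rightarrow> 'a::banach"
  assumes k: "continuous_on UNIV k" and h: "continuous_on {0..\<tau>} h"
  shows "integral {0..\<tau>} (\<lambda>u. integral {0..\<tau>} (\<lambda>v. k (u - v) *\<^sub>R h v))
       = integral {0..\<tau>} (\<lambda>v. integral {0..\<tau>} (\<lambda>u. k (u - v)) *\<^sub>R h v)"
proof -
  have "continuous_on (cbox (0, 0) (\<tau>, \<tau>)) (\<lambda>(u, v). k (u - v) *\<^sub>R h v)"
    unfolding case_prod_beta cbox_Pair_eq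
    by (intro continuous_intros continuous_on_compose2[OF k] continuous_on_compose2[OF h]) auto
  from integral_swap_continuous[OF this]
  have "integral {0..\<tau>} (\<lambda>u. integral {0..\<tau>} (\<lambda>v. k (u - v) *\<^sub>R h v))
      = integral {0..\<tau>} (\<lambda>v. integral {0..\<tau>} (\<lambda>u. k (u - v) *\<^sub>R h v))"
    by simp
  moreover have "integral {0..\<tau>} (\<lambda>u. k (u - v) *\<^sub>R h v) = integral {0..\<tau>} (\<lambda>u. k (u - v)) *\<^sub>R h v" for v
    by (intro integral_unique has_integral_scaleR_left integrable_integral integrable_continuous_real
        continuous_on_compose2[OF k] continuous_intros) auto
  ultimately show ?thesis
    by simp
qed

lemma cutoff_mass_integral_approx:
  fixes h :: "real \<Rightarrow> 'a::banach"
  assumes n: "0 < n" and b: "0 < b" "b \<le> 1" and \<tau>: "0 \<le> \<tau>" and h: "continuous_on {0..\<tau>} h"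
    and bound: "\<And>v. v \<in> {0..\<tau>} \<Longrightarrow> norm (h v) \<le> M"
  shows "norm (frac_integral (b + 1) h \<tau>
           - integral {0..\<tau>} (\<lambda>v. integral {0..\<tau>} (\<lambda>u. cutoff_kernel b n (u - v)) *\<^sub>R h v))
         \<le> (\<tau> - 0) * (M * gkern (b + 1) (1 / real n))"
proof -
  define K where "K v = integral {0..\<tau>} (\<lambda>u. cutoff_kernel b n (u - v))" for v
  have "continuous_on ({0..\<tau>} \<times> cbox 0 \<tau>) (\<lambda>(v, u). cutoff_kernel b n (u - v))"
    unfolding case_prod_beta
    by (intro continuous_intros continuous_on_compose2[OF cutoff_kernel_continuous[OF n b(1)]]) auto
  from integral_continuous_on_param[OF this] have K_cont: "continuous_on {0..\<tau>} K"
    by (simp add: K_def[abs_def])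
  have "norm (frac_integral (b + 1) h \<tau> - integral {0..\<tau>} (\<lambda>v. K v *\<^sub>R h v))
      \<le> (\<tau> - 0) * (M * gkern (b + 1) (1 / real n))"
    unfolding frac_integral_def using \<tau>
  proof (intro integral_diff_norm_le integrable_continuous_real continuous_intros h K_cont
      continuous_on_compose2[OF gkern_continuous[of "b + 1" UNIV]])
    fix v assume v: "v \<in> {0..\<tau>}"
    have "norm (gkern (b + 1) (\<tau> - v) *\<^sub>R h v - K v *\<^sub>R h v) = \<bar>gkern (b + 1) (\<tau> - v) - K v\<bar> * norm (h v)"
      by (simp flip: scaleR_diff_left)
    also have "\<dots> \<le> gkern (b + 1) (1 / real n) * M"
      using cutoff_kernel_mass[OF n b, of v \<tau>] v bound[OF v] gkern_nonneg[of "b + 1"] b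
      by (intro mult_mono) (auto simp: K_def abs_minus_commute)
    finally show "norm (gkern (b + 1) (\<tau> - v) *\<^sub>R h v - K v *\<^sub>R h v) \<le> M * gkern (b + 1) (1 / real n)"
      by (simp add: mult.commute)
  qed (use b in auto)
  then show ?thesis
    by (simp add: K_def)
qed

text \<open>With the cut-off kernel Fubini applies, and both sides of the law
  \<open>\<integral>\<^sub>0\<^sup>\<tau> (g\<^sub>b * h) = g\<^sub>b\<^sub>+\<^sub>1 * h\<close> change by \<open>O(g\<^sub>b\<^sub>+\<^sub>1(1/n))\<close>.\<close>
lemma frac_integral_integral_error:
  fixes h :: "real \<Rightarrow> 'a::banach"
  assumes n: "0 < n" and b: "0 < b" "b \<le> 1" and \<tau>: "0 \<le> \<tau>" and h: "continuous_on {0..\<tau>} h"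
    and bound: "\<And>v. v \<in> {0..\<tau>} \<Longrightarrow> norm (h v) \<le> M"
  shows "norm (integral {0..\<tau>} (frac_integral b h) - frac_integral (b + 1) h \<tau>)
         \<le> 2 * \<tau> * M * gkern (b + 1) (1 / real n)"
proof -
  define F where "F = cutoff_integral b n \<tau> h"
  define KH where "KH = integral {0..\<tau>} (\<lambda>v. integral {0..\<tau>} (\<lambda>u. cutoff_kernel b n (u - v)) *\<^sub>R h v)"
  have swap: "integral {0..\<tau>} F = KH"
    unfolding F_def KH_def cutoff_integral_def
    by (rule integral_swap_kernel[OF cutoff_kernel_continuous[OF n b(1)] h])
  have "norm (integral {0..\<tau>} (frac_integral b h) - integral {0..\<tau>} F)
      \<le> (\<tau> - 0) * (M * gkern (b + 1) (1 / real n))"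
    unfolding F_def using \<tau>
    by (intro integral_diff_norm_le integrable_continuous_real frac_integral_continuous b h
        cutoff_integral_continuous n) (auto intro: cutoff_integral_approx[OF n b _ _ h bound])
  moreover have "norm (frac_integral (b + 1) h \<tau> - KH) \<le> (\<tau> - 0) * (M * gkern (b + 1) (1 / real n))"
    unfolding KH_def by (rule cutoff_mass_integral_approx[OF n b \<tau> h bound])
  ultimately show ?thesis
    using swap norm_triangle_ineq4[of "integral {0..\<tau>} (frac_integral b h) - KH" "frac_integral (b + 1) h \<tau> - KH"]
    by simp
qed

lemma frac_integral_integral:
  fixes h :: "real \<Rightarrow> 'a::banach"
  assumes b: "0 < b" "b \<le> 1" and \<tau>: "0 \<le> \<tau>" and h: "continuous_on {0..\<tau>} h"
  shows "integral {0..\<tau>} (frac_integral b h) = frac_integral (b + 1) h \<tau>"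
proof -
  obtain M where M: "0 \<le> M" "\<And>v. v \<in> {0..\<tau>} \<Longrightarrow> norm (h v) \<le> M"
    using continuous_on_compact_bound[OF compact_Icc h] by blast
  have "(\<lambda>n. 2 * \<tau> * M * gkern (b + 1) (1 / real n)) \<longlonglongrightarrow> 0"
    by (intro tendsto_mult_right_zero gkern_at_inverse_tendsto b)
  then have "norm (integral {0..\<tau>} (frac_integral b h) - frac_integral (b + 1) h \<tau>) \<le> 0"
    using frac_integral_integral_error[OF _ b \<tau> h M(2)]
    by (intro LIMSEQ_le_const) (auto intro!: exI[of _ 1])
  then show ?thesis
    by simp
qed

section \<open>Closed operators\<close>

lemma closed_op_graph_subspace:
  assumes "closed_densely_defined D A"
  shows "subspace {(x, A x) | x. x \<in> D}"
proof -
  have D: "subspace D" and add: "\<And>x y. x \<in> D \<Longrightarrow> y \<in> D \<Longrightarrow> A (x + y) = A x + A y"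
    and scale: "\<And>c x. x \<in> D \<Longrightarrow> A (c *\<^sub>R x) = c *\<^sub>R A x"
    using assms by (auto simp: closed_densely_defined_def)
  have "A 0 = 0"
    using scale[of 0 0] subspace_0[OF D] by simp
  then show ?thesis
    unfolding subspace_def
    using subspace_0[OF D] add subspace_add[OF D] scale subspace_scale[OF D]
    by (fastforce simp: zero_prod_def)
qed

lemma closed_op_zero:
  assumes "closed_densely_defined D A"
  shows "0 \<in> D \<and> A 0 = 0"
  using subspace_0[OF closed_op_graph_subspace[OF assms]] by (auto simp: zero_prod_def)

lemma closed_op_diff:
  assumes cdd: "closed_densely_defined D A" and "x \<in> D" "y \<in> D"
  shows "x - y \<in> D \<and> A (x - y) = A x - A y"
  using subspace_diff[OF closed_op_graph_subspace[OF cdd], of "(x, A x)" "(y, A y)"] assms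
  by auto

lemma closed_op_sum:
  assumes cdd: "closed_densely_defined D A" and xD: "\<And>i. i \<in> K \<Longrightarrow> x i \<in> D"
  shows "(\<Sum>i\<in>K. x i) \<in> D \<and> A (\<Sum>i\<in>K. x i) = (\<Sum>i\<in>K. A (x i))"
proof -
  have "(\<Sum>i\<in>K. (x i, A (x i))) \<in> {(x, A x) | x. x \<in> D}"
    using xD by (intro subspace_sum[OF closed_op_graph_subspace[OF cdd]]) auto
  then show ?thesis
    by (auto simp: sum_prod)
qed

lemma closed_op_limit:
  assumes cdd: "closed_densely_defined D A" and xD: "\<And>n. x n \<in> D"
    and lim: "x \<longlonglongrightarrow> l" and Alim: "(\<lambda>n. A (x n)) \<longlonglongrightarrow> m"
  shows "l \<in> D \<and> A l = m"
proof -
  have "closed {(x, A x) | x. x \<in> D}"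
    using cdd by (simp add: closed_densely_defined_def)
  moreover have "(\<lambda>n. (x n, A (x n))) \<longlonglongrightarrow> (l, m)"
    using lim Alim by (rule tendsto_Pair)
  ultimately have "(l, m) \<in> {(x, A x) | x. x \<in> D}"
    using xD by (intro Lim_in_closed_set) auto
  then show ?thesis
    by auto
qed

lemma closed_op_extend_dense:
  assumes cdd: "closed_densely_defined D A"
    and L: "continuous_on UNIV L" and K: "continuous_on UNIV K"
    and on_domain: "\<And>y. y \<in> D \<Longrightarrow> L y \<in> D \<and> A (L y) = K y"
  shows "L x \<in> D \<and> A (L x) = K x"
proof -
  have "x \<in> closure D"
    using cdd by (simp add: closed_densely_defined_def)
  then obtain y where y: "\<And>n. y n \<in> D" "y \<longlonglongrightarrow> x"
    by (auto simp: closure_sequential)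
  have "(\<lambda>n. L (y n)) \<longlonglongrightarrow> L x" "(\<lambda>n. K (y n)) \<longlonglongrightarrow> K x"
    using L K y(2) by (auto intro: isCont_tendsto_compose simp: continuous_on_eq_continuous_at)
  then show ?thesis
    using on_domain y(1) by (intro closed_op_limit[OF cdd, where x="\<lambda>n. L (y n)"]) auto
qed

lemma integral_in_closed_subspace:
  fixes f :: "'n::euclidean_space \<Rightarrow> 'b::real_normed_vector"
  assumes V: "closed V" "subspace V" and fV: "\<And>x. x \<in> cbox a b \<Longrightarrow> f x \<in> V"
    and I: "(f has_integral y) (cbox a b)"
  shows "y \<in> V"
proof (rule Lim_in_closed_set[OF V(1) _ division_filter_not_empty])
  show "((\<lambda>p. \<Sum>(x,k)\<in>p. Henstock_Kurzweil_Integration.content k *\<^sub>R f x) \<longlongrightarrow> y) (division_filter (cbox a b))"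
    using I by (simp add: has_integral_cbox)
  show "\<forall>\<^sub>F p in division_filter (cbox a b). (\<Sum>(x,k)\<in>p. Henstock_Kurzweil_Integration.content k *\<^sub>R f x) \<in> V"
    using eventually_division_filter_tagged_division[of "cbox a b"]
  proof (rule eventually_mono)
    fix p assume p: "p tagged_division_of cbox a b"
    show "(\<Sum>(x,k)\<in>p. Henstock_Kurzweil_Integration.content k *\<^sub>R f x) \<in> V"
    proof (rule subspace_sum[OF V(2)])
      fix xk assume xk: "xk \<in> p"
      then obtain x k where xk': "xk = (x, k)" "x \<in> cbox a b"
        using tagged_division_ofD(2,3)[OF p] by (metis prod.exhaust subsetD)
      then show "(case xk of (x, k) \<Rightarrow> Henstock_Kurzweil_Integration.content k *\<^sub>R f x) \<in> V"
        using fV V(2) by (simp add: subspace_scale)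
    qed
  qed
qed

lemma has_integral_Pair:
  fixes f :: "'n::euclidean_space \<Rightarrow> 'a::real_normed_vector" and g :: "'n \<Rightarrow> 'b::real_normed_vector"
  assumes "(f has_integral I) S" "(g has_integral J) S"
  shows "((\<lambda>x. (f x, g x)) has_integral (I, J)) S"
proof -
  have "((\<lambda>x. (f x, 0)) has_integral (I, 0)) S" "((\<lambda>x. (0, g x)) has_integral (0, J)) S"
    using has_integral_linear[OF assms(1), of "\<lambda>x. (x, 0)"] has_integral_linear[OF assms(2), of "\<lambda>x. (0, x)"]
    by (simp_all add: o_def bounded_linear_Pair bounded_linear_ident bounded_linear_zero)
  from has_integral_add[OF this] show ?thesis
    by simp
qed

lemma closed_op_integral:
  fixes g :: "real \<Rightarrow> 'a::banach"
  assumes cdd: "closed_densely_defined D A" and gD: "\<And>v. v \<in> {a..b} \<Longrightarrow> g v \<in> D"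
    and I: "(g has_integral I) {a..b}" and J: "((\<lambda>v. A (g v)) has_integral J) {a..b}"
  shows "I \<in> D \<and> A I = J"
proof -
  have "(I, J) \<in> {(x, A x) | x. x \<in> D}"
  proof (rule integral_in_closed_subspace)
    show "closed {(x, A x) | x. x \<in> D}"
      using cdd by (simp add: closed_densely_defined_def)
    show "((\<lambda>v. (g v, A (g v))) has_integral (I, J)) (cbox a b)"
      using has_integral_Pair[OF I J] by simp
  qed (use closed_op_graph_subspace[OF cdd] gD in auto)
  then show ?thesis
    by auto
qed

section \<open>Subdivisions\<close>

lemma subdivision_less:
  assumes sd: "subdivision a b n d" and ij: "i < j" "j \<le> n"
  shows "d i < d j"
  using ij
proof (induction j)
  case (Suc j)
  then have "d j < d (Suc j)"
    using sd by (simp add: subdivision_def)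
  with Suc show ?case
    by (cases "i = j") auto
qed simp

lemma subdivision_le: "subdivision a b n d \<Longrightarrow> i \<le> j \<Longrightarrow> j \<le> n \<Longrightarrow> d i \<le> d j"
  using subdivision_less[of a b n d i j] by (cases "i = j") auto

lemma subdivision_range: "subdivision a b n d \<Longrightarrow> i \<le> n \<Longrightarrow> a \<le> d i \<and> d i \<le> b"
  using subdivision_le[of a b n d 0 i] subdivision_le[of a b n d i n] by (auto simp: subdivision_def)

lemma subdivision_cell: "subdivision a b n d \<Longrightarrow> i < n \<Longrightarrow> {d i..d (Suc i)} \<subseteq> {a..b}"
  using subdivision_range[of a b n d i] subdivision_range[of a b n d "Suc i"] by auto

lemma subdivision_length_sum: "subdivision a b n d \<Longrightarrow> (\<Sum>i<n. d (Suc i) - d i) = b - a"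
  by (simp add: sum_lessThan_telescope subdivision_def)

lemma integral_subdivision:
  fixes g :: "real \<Rightarrow> 'a::banach"
  assumes sd: "subdivision a b n d" and g: "g integrable_on {a..b}"
  shows "integral {a..b} g = (\<Sum>i<n. integral {d i..d (Suc i)} g)"
proof -
  have "integral {d 0..d m} g = (\<Sum>i<m. integral {d i..d (Suc i)} g)" if "m \<le> n" for m
    using that
  proof (induction m)
    case (Suc m)
    have "g integrable_on {d 0..d (Suc m)}"
      by (rule integrable_on_subinterval[OF g]) (use subdivision_range[OF sd] Suc.prems in auto)
    then have "integral {d 0..d (Suc m)} g = integral {d 0..d m} g + integral {d m..d (Suc m)} g"
      using subdivision_le[OF sd, of 0 m] subdivision_le[OF sd, of m "Suc m"] Suc.prems
      by (intro Henstock_Kurzweil_Integration.integral_combine[symmetric]) auto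
    then show ?case
      using Suc by simp
  qed simp
  from this[of n] show ?thesis
    using sd by (simp add: subdivision_def)
qed

definition uniform_subdivision :: "real \<Rightarrow> real \<Rightarrow> nat \<Rightarrow> nat \<Rightarrow> real" where
  "uniform_subdivision a b k i = a + (b - a) * real i / real k"

lemma uniform_subdivision_step:
  "uniform_subdivision a b k (Suc i) - uniform_subdivision a b k i = (b - a) / real k"
  by (simp add: uniform_subdivision_def add_divide_distrib[symmetric] algebra_simps)

lemma uniform_subdivision: "a < b \<Longrightarrow> 0 < k \<Longrightarrow> subdivision a b k (uniform_subdivision a b k)"
  by (auto simp: subdivision_def uniform_subdivision_def divide_strict_right_mono)

lemma block_index:
  fixes p :: "nat \<Rightarrow> nat"
  assumes mono: "\<And>i. i < n \<Longrightarrow> p i \<le> p (Suc i)" and p0: "p 0 = 0"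
  shows "\<exists>\<sigma>. \<forall>j<p n. \<sigma> j < n \<and> p (\<sigma> j) \<le> j \<and> j < p (Suc (\<sigma> j))"
  using mono
proof (induction n)
  case (Suc n)
  then obtain \<sigma> where \<sigma>: "\<forall>j<p n. \<sigma> j < n \<and> p (\<sigma> j) \<le> j \<and> j < p (Suc (\<sigma> j))"
    by auto
  show ?case
    by (rule exI[of _ "\<lambda>j. if j < p n then \<sigma> j else n"]) (use \<sigma> in auto)
qed (simp add: p0)

lemma sum_blocks:
  fixes p :: "nat \<Rightarrow> nat"
  assumes mono: "\<And>i. i < n \<Longrightarrow> p i \<le> p (Suc i)" and p0: "p 0 = 0"
  shows "(\<Sum>j<p n. F j) = (\<Sum>i<n. \<Sum>j=p i..<p (Suc i). F j)"
  using mono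
proof (induction n)
  case (Suc n)
  then have "(\<Sum>j<p (Suc n). F j) = (\<Sum>j<p n. F j) + (\<Sum>j=p n..<p (Suc n). F j)"
    using sum.atLeastLessThan_concat[of 0 "p n" "p (Suc n)" F] by (simp add: atLeast0LessThan)
  with Suc show ?case
    by simp
qed (simp add: p0)

lemma subdivision_embedding:
  assumes sd: "subdivision a b n d" and se: "subdivision a b N e" and points: "d ` {..n} \<subseteq> e ` {..N}"
  obtains p where "\<And>i. i \<le> n \<Longrightarrow> e (p i) = d i" and "\<And>i j. i \<le> j \<Longrightarrow> j \<le> n \<Longrightarrow> p i \<le> p j"
    and "p 0 = 0" and "p n = N"
proof -
  have "\<forall>i\<in>{..n}. \<exists>k. k \<le> N \<and> e k = d i"
    using points by fastforce
  from bchoice[OF this] obtain p where "\<forall>i\<in>{..n}. p i \<le> N \<and> e (p i) = d i"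
    by blast
  then have p: "\<And>i. i \<le> n \<Longrightarrow> p i \<le> N \<and> e (p i) = d i"
    by simp
  have e_less_iff: "e i < e j \<longleftrightarrow> i < j" if "i \<le> N" "j \<le> N" for i j
  proof
    assume "e i < e j"
    show "i < j"
    proof (rule ccontr)
      assume "\<not> i < j"
      then have "e j \<le> e i"
        using subdivision_le[OF se, of j i] that by simp
      with \<open>e i < e j\<close> show False
        by simp
    qed
  qed (use subdivision_less[OF se] that in blast)
  have p_less: "p i < p j" if "i < j" "j \<le> n" for i j
    using subdivision_less[OF sd that] p[of i] p[of j] e_less_iff[of "p i" "p j"] that by auto
  have e_inj: "i = j" if "i \<le> N" "j \<le> N" "e i = e j" for i j
    using e_less_iff[of i j] e_less_iff[of j i] that by (cases i j rule: linorder_cases) auto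
  show ?thesis
  proof
    show "p i \<le> p j" if "i \<le> j" "j \<le> n" for i j
      using p_less[of i j] that by (cases "i = j") auto
    show "p 0 = 0" "p n = N"
      using e_inj[of "p 0" 0] e_inj[of "p n" N] p[of 0] p[of n] sd se by (auto simp: subdivision_def)
  qed (use p in simp)
qed

lemma subdivision_refinement:
  fixes G :: "real \<Rightarrow> 'a::real_normed_vector \<Rightarrow>\<^sub>L 'b::real_normed_vector"
  assumes sd: "subdivision a b n d" and se: "subdivision a b N e" and points: "d ` {..n} \<subseteq> e ` {..N}"
  obtains \<sigma> where "\<And>j. j < N \<Longrightarrow> \<sigma> j < n \<and> d (\<sigma> j) \<le> e j \<and> e (Suc j) \<le> d (Suc (\<sigma> j))"
    and "\<And>x. (\<Sum>i<n. (G (d (Suc i)) - G (d i)) (x i)) = (\<Sum>j<N. (G (e (Suc j)) - G (e j)) (x (\<sigma> j)))"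
proof -
  obtain p where p: "\<And>i. i \<le> n \<Longrightarrow> e (p i) = d i" and p_le: "\<And>i j. i \<le> j \<Longrightarrow> j \<le> n \<Longrightarrow> p i \<le> p j"
    and p0: "p 0 = 0" and pn: "p n = N"
    using subdivision_embedding[OF sd se points] by blast
  have "\<exists>\<sigma>. \<forall>j<p n. \<sigma> j < n \<and> p (\<sigma> j) \<le> j \<and> j < p (Suc (\<sigma> j))"
    by (rule block_index) (use p_le p0 in auto)
  then obtain \<sigma> where \<sigma>: "\<And>j. j < p n \<Longrightarrow> \<sigma> j < n \<and> p (\<sigma> j) \<le> j \<and> j < p (Suc (\<sigma> j))"
    by blast
  have \<sigma>_eq: "\<sigma> j = i" if i: "i < n" "p i \<le> j" "j < p (Suc i)" for i j
  proof -
    have "j < p n" using i p_le[of "Suc i" n] by simp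
    then have "\<not> \<sigma> j < i" "\<not> i < \<sigma> j"
      using \<sigma>[of j] i p_le[of "Suc (\<sigma> j)" i] p_le[of "Suc i" "\<sigma> j"] by auto
    then show ?thesis by simp
  qed
  show ?thesis
  proof
    fix j assume j: "j < N"
    then have "\<sigma> j < n" "p (\<sigma> j) \<le> j" "Suc j \<le> p (Suc (\<sigma> j))"
      using \<sigma>[of j] pn by auto
    then show "\<sigma> j < n \<and> d (\<sigma> j) \<le> e j \<and> e (Suc j) \<le> d (Suc (\<sigma> j))"
      using subdivision_le[OF se, of "p (\<sigma> j)" j] subdivision_le[OF se, of "Suc j" "p (Suc (\<sigma> j))"]
        p[of "\<sigma> j"] p[of "Suc (\<sigma> j)"] p_le[of "Suc (\<sigma> j)" n] j pn by auto
  next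
    fix x :: "nat \<Rightarrow> 'a"
    have block: "(\<Sum>j=p i..<p (Suc i). (G (e (Suc j)) - G (e j)) (x (\<sigma> j))) = (G (d (Suc i)) - G (d i)) (x i)"
      if i: "i < n" for i
    proof -
      have "(\<Sum>j=p i..<p (Suc i). (G (e (Suc j)) - G (e j)) (x (\<sigma> j)))
          = (\<Sum>j=p i..<p (Suc i). G (e (Suc j)) (x i) - G (e j) (x i))"
        using \<sigma>_eq[OF i] by (intro sum.cong) (auto simp: blinfun.diff_left)
      also have "\<dots> = G (e (p (Suc i))) (x i) - G (e (p i)) (x i)"
        using p_le[of i "Suc i"] i by (intro sum_Suc_diff') simp
      finally show ?thesis
        using p[of i] p[of "Suc i"] i by (simp add: blinfun.diff_left)
    qed
    show "(\<Sum>i<n. (G (d (Suc i)) - G (d i)) (x i)) = (\<Sum>j<N. (G (e (Suc j)) - G (e j)) (x (\<sigma> j)))"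
      using sum_blocks[of n p "\<lambda>j. (G (e (Suc j)) - G (e j)) (x (\<sigma> j))", OF _ p0] p_le block pn
      by simp
  qed
qed

lemma sorted_nth_le:
  fixes xs :: "real list"
  assumes "sorted_wrt (<) xs" "i \<le> j" "j < length xs"
  shows "xs ! i \<le> xs ! j"
  using assms sorted_wrt_nth_less[of "(<)" xs i j] by (cases "i = j") auto

lemma finite_set_subdivision:
  assumes E: "finite E" "E \<subseteq> {a..b}" "a \<in> E" "b \<in> E" and ab: "a < b"
  defines "e \<equiv> \<lambda>j. sorted_list_of_set E ! j"
  shows "subdivision a b (card E - 1) e" and "e ` {..card E - 1} = E"
proof -
  let ?xs = "sorted_list_of_set E"
  have s: "sorted_wrt (<) ?xs"
    by simp
  have set: "set ?xs = E" and len: "length ?xs = card E"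
    using E by simp_all
  have "card {a, b} \<le> card E"
    using E by (intro card_mono) auto
  then have cE: "2 \<le> card E"
    using ab by simp
  have idx: "{..card E - 1} = {..<length ?xs}"
    using cE len by auto
  show "e ` {..card E - 1} = E"
    using nth_image[of "length ?xs" ?xs] unfolding idx e_def
    by (simp add: atLeast0LessThan set)
  then have range: "e j \<in> {a..b}" if "j \<le> card E - 1" for j
    using E(2) that by blast
  obtain ka kb where k: "ka < length ?xs" "?xs ! ka = a" "kb < length ?xs" "?xs ! kb = b"
    using E(3,4) set by (metis in_set_conv_nth)
  have "e 0 \<le> a"
    using sorted_nth_le[OF s le0 k(1)] k(2) by (simp add: e_def)
  moreover have "b \<le> e (card E - 1)"
    using sorted_nth_le[OF s _, of kb "card E - 1"] k(3,4) len cE by (simp add: e_def)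
  ultimately show "subdivision a b (card E - 1) e"
    using range[of 0] range[of "card E - 1"] s len cE
    by (auto simp: subdivision_def e_def intro: sorted_wrt_nth_less)
qed

lemma common_refinement:
  assumes ab: "a < b" and sd: "subdivision a b n d" "subdivision a b m d'"
  obtains N e where "subdivision a b N e" and "d ` {..n} \<subseteq> e ` {..N}" and "d' ` {..m} \<subseteq> e ` {..N}"
proof -
  define E where "E = d ` {..n} \<union> d' ` {..m}"
  have "finite E" "E \<subseteq> {a..b}" "a \<in> E" "b \<in> E"
    using subdivision_range[OF sd(1)] subdivision_range[OF sd(2)] sd
    by (force simp: E_def subdivision_def)+
  from finite_set_subdivision[OF this ab] show ?thesis
    by (intro that[of "card E - 1" "\<lambda>j. sorted_list_of_set E ! j"]) (auto simp: E_def)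
qed

section \<open>Riemann--Stieltjes sums\<close>

definition RS_sum ::
  "(real \<Rightarrow> 'a::real_normed_vector \<Rightarrow>\<^sub>L 'b::real_normed_vector) \<Rightarrow> (real \<Rightarrow> 'a) \<Rightarrow> nat \<Rightarrow>
     (nat \<Rightarrow> real) \<Rightarrow> (nat \<Rightarrow> real) \<Rightarrow> 'b" where
  "RS_sum G f n d \<xi> = (\<Sum>i<n. (G (d (Suc i)) - G (d i)) (f (\<xi> i)))"

definition fine_tagged :: "real \<Rightarrow> real \<Rightarrow> real \<Rightarrow> nat \<Rightarrow> (nat \<Rightarrow> real) \<Rightarrow> (nat \<Rightarrow> real) \<Rightarrow> bool" where
  "fine_tagged a b \<delta> n d \<xi> \<longleftrightarrow>
     subdivision a b n d \<and> (\<forall>i<n. d i \<le> \<xi> i \<and> \<xi> i \<le> d (Suc i)) \<and> (\<forall>i<n. d (Suc i) - d i < \<delta>)"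

lemma RS_has_integral_iff:
  "RS_has_integral G f a b I \<longleftrightarrow>
     (\<forall>\<epsilon>>0. \<exists>\<delta>>0. \<forall>n d \<xi>. fine_tagged a b \<delta> n d \<xi> \<longrightarrow> norm (RS_sum G f n d \<xi> - I) < \<epsilon>)"
  by (simp add: RS_has_integral_def RS_sum_def fine_tagged_def)

definition uniform_RS_sum ::
  "(real \<Rightarrow> 'a::real_normed_vector \<Rightarrow>\<^sub>L 'b::real_normed_vector) \<Rightarrow> (real \<Rightarrow> 'a) \<Rightarrow> real \<Rightarrow> real \<Rightarrow> nat \<Rightarrow> 'b"
  where "uniform_RS_sum G f a b k =
    RS_sum G f (Suc k) (uniform_subdivision a b (Suc k)) (uniform_subdivision a b (Suc k))"

lemma eventually_uniform_fine:
  assumes ab: "a < b" and \<delta>: "0 < \<delta>"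
  shows "\<forall>\<^sub>F k in sequentially.
    fine_tagged a b \<delta> (Suc k) (uniform_subdivision a b (Suc k)) (uniform_subdivision a b (Suc k))"
proof -
  have "(\<lambda>k. (b - a) / real (Suc k)) \<longlonglongrightarrow> 0"
    by (intro LIMSEQ_Suc lim_const_over_n)
  then have "\<forall>\<^sub>F k in sequentially. (b - a) / real (Suc k) < \<delta>"
    using \<delta> by (rule order_tendstoD)
  then show ?thesis
  proof eventually_elim
    case (elim k)
    have "subdivision a b (Suc k) (uniform_subdivision a b (Suc k))"
      using ab by (intro uniform_subdivision) auto
    then show ?case
      using elim subdivision_le[of a b "Suc k" "uniform_subdivision a b (Suc k)"]
      by (auto simp: fine_tagged_def uniform_subdivision_step)
  qed
qed

lemma RS_uniform_sums_tendsto: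
  assumes I: "RS_has_integral G f a b I" and ab: "a < b"
  shows "uniform_RS_sum G f a b \<longlonglongrightarrow> I"
proof (rule tendstoI)
  fix e :: real assume "0 < e"
  then obtain \<delta> where "0 < \<delta>" and close: "\<And>n d \<xi>. fine_tagged a b \<delta> n d \<xi> \<Longrightarrow> norm (RS_sum G f n d \<xi> - I) < e"
    using I unfolding RS_has_integral_iff by blast
  from eventually_uniform_fine[OF ab this(1)]
  show "\<forall>\<^sub>F k in sequentially. dist (uniform_RS_sum G f a b k) I < e"
    by eventually_elim (simp add: close uniform_RS_sum_def dist_norm)
qed

section \<open>Operator-valued functions of bounded semivariation\<close>

definition semivariation_bound ::
  "(real \<Rightarrow> 'a::real_normed_vector \<Rightarrow>\<^sub>L 'b::real_normed_vector) \<Rightarrow> real \<Rightarrow> real \<Rightarrow> real \<Rightarrow> bool" where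
  "semivariation_bound G a b M \<longleftrightarrow>
     (\<forall>n d xs. subdivision a b n d \<and> (\<forall>i<n. norm (xs i) \<le> 1) \<longrightarrow>
        norm (\<Sum>i<n. (G (d (Suc i)) - G (d i)) (xs i)) \<le> M)"

lemma bounded_semivariation_iff: "bounded_semivariation G a b \<longleftrightarrow> (\<exists>M. semivariation_bound G a b M)"
  by (simp add: bounded_semivariation_def semivariation_bound_def)

lemma semivariation_boundD:
  "semivariation_bound G a b M \<Longrightarrow> subdivision a b n d \<Longrightarrow> (\<And>i. i < n \<Longrightarrow> norm (xs i) \<le> 1) \<Longrightarrow>
    norm (\<Sum>i<n. (G (d (Suc i)) - G (d i)) (xs i)) \<le> M"
  by (simp add: semivariation_bound_def)

text \<open>Subdivisions with one or two cells bound the increments of \<open>G\<close> on unit vectors.\<close>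
lemma semivariation_unit_bound:
  assumes sv: "semivariation_bound G a b M" and ab: "a < b" and u: "u \<in> {a..b}" and y: "norm y \<le> 1"
  shows "norm ((G u - G a) y) \<le> M"
proof -
  define d1 where "d1 = (\<lambda>i::nat. if i = 0 then a else b)"
  have sd1: "subdivision a b 1 d1"
    using ab by (simp add: subdivision_def d1_def)
  consider "u = a" | "u = b" | "a < u" "u < b"
    using u by fastforce
  then show ?thesis
  proof cases
    case 1
    with semivariation_boundD[OF sv sd1, of "\<lambda>_. 0"] show ?thesis
      by simp
  next
    case 2
    with semivariation_boundD[OF sv sd1, of "\<lambda>_. y"] y show ?thesis
      by (simp add: d1_def)
  next
    case 3
    define d2 where "d2 = (\<lambda>i::nat. if i = 0 then a else if i = 1 then u else b)"
    have "subdivision a b 2 d2"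
      using 3 by (auto simp: subdivision_def d2_def less_Suc_eq numeral_2_eq_2)
    from semivariation_boundD[OF sv this, of "\<lambda>i. if i = 0 then y else 0"] y show ?thesis
      by (simp add: numeral_2_eq_2 d2_def)
  qed
qed

lemma semivariation_operator_bound:
  assumes sv: "semivariation_bound G a b M" and ab: "a < b" and u: "u \<in> {a..b}"
  shows "norm ((G u - G a) x) \<le> M * norm x"
proof (cases "x = 0")
  case False
  have "(G u - G a) x = norm x *\<^sub>R (G u - G a) (x /\<^sub>R norm x)"
    using False by (simp add: blinfun.scaleR_right)
  then have "norm ((G u - G a) x) = norm x * norm ((G u - G a) (x /\<^sub>R norm x))"
    by simp
  also have "\<dots> \<le> norm x * M"
    using False by (intro mult_left_mono semivariation_unit_bound[OF sv ab u]) simp_all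
  finally show ?thesis
    by (simp add: mult.commute)
qed simp

text \<open>Bounded semivariation on \<open>[0, r]\<close> passes to \<open>s \<mapsto> G (t - s)\<close> on \<open>[0, t]\<close>: reverse
  the subdivision and extend it by the point \<open>r\<close>.\<close>
lemma semivariation_bound_reflect:
  fixes G :: "real \<Rightarrow> 'a::real_normed_vector \<Rightarrow>\<^sub>L 'b::real_normed_vector"
  assumes sv: "semivariation_bound G 0 r M" and t: "0 < t" "t \<le> r"
  shows "semivariation_bound (\<lambda>s. G (t - s)) 0 t M"
  unfolding semivariation_bound_def
proof (intro allI impI, elim conjE)
  fix N e and ys :: "nat \<Rightarrow> 'a"
  assume sd: "subdivision 0 t N e" and ys: "\<forall>j<N. norm (ys j) \<le> 1"
  define e' where "e' k = (if k \<le> N then t - e (N - k) else r)" for k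
  define n' where "n' = (if t < r then Suc N else N)"
  define xs' where "xs' k = (if k < N then - ys (N - Suc k) else 0)" for k
  have e0: "e 0 = 0" and eN: "e N = t"
    using sd by (auto simp: subdivision_def)
  have sd': "subdivision 0 r n' e'"
    unfolding subdivision_def
  proof (intro conjI allI impI)
    fix k assume k: "k < n'"
    show "e' k < e' (Suc k)"
    proof (cases "k < N")
      case True
      then have "e (N - Suc k) < e (Suc (N - Suc k))"
        using sd by (simp add: subdivision_def)
      with True show ?thesis
        by (simp add: e'_def Suc_diff_Suc)
    next
      case False
      with k have "k = N" "t < r"
        by (auto simp: n'_def split: if_splits)
      then show ?thesis
        using e0 by (simp add: e'_def)
    qed
  qed (use e0 eN t in \<open>auto simp: e'_def n'_def\<close>)
  have "(\<Sum>k<n'. (G (e' (Suc k)) - G (e' k)) (xs' k)) = (\<Sum>k<N. (G (e' (Suc k)) - G (e' k)) (xs' k))"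
    by (simp add: n'_def xs'_def)
  also have "\<dots> = (\<Sum>k<N. (\<lambda>j. (G (t - e (Suc j)) - G (t - e j)) (ys j)) (N - Suc k))"
    by (intro sum.cong refl) (auto simp: e'_def xs'_def Suc_diff_Suc blinfun.minus_right
        blinfun.diff_left)
  also have "\<dots> = (\<Sum>j<N. (G (t - e (Suc j)) - G (t - e j)) (ys j))"
    by (rule sum.nat_diff_reindex)
  finally show "norm (\<Sum>j<N. (G (t - e (Suc j)) - G (t - e j)) (ys j)) \<le> M"
    using semivariation_boundD[OF sv sd', of xs'] ys by (auto simp: xs'_def)
qed

section \<open>Existence of the Riemann--Stieltjes integral\<close>

text \<open>Two fine tagged sums are compared on their common refinement: their difference is a
  semivariation sum whose coefficients are differences of values of \<open>f\<close> at nearby tags.\<close>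
lemma RS_sums_close:
  fixes G :: "real \<Rightarrow> 'a::real_normed_vector \<Rightarrow>\<^sub>L 'b::real_normed_vector"
  assumes ab: "a < b" and sv: "semivariation_bound G a b M" and \<epsilon>: "0 < \<epsilon>"
    and f_close: "\<And>s s'. s \<in> {a..b} \<Longrightarrow> s' \<in> {a..b} \<Longrightarrow> \<bar>s - s'\<bar> < 2 * \<delta> \<Longrightarrow> norm (f s - f s') \<le> \<epsilon>"
    and fine: "fine_tagged a b \<delta> n d \<xi>" "fine_tagged a b \<delta> m d' \<xi>'"
  shows "norm (RS_sum G f n d \<xi> - RS_sum G f m d' \<xi>') \<le> M * \<epsilon>"
proof -
  have sd: "subdivision a b n d" "subdivision a b m d'"
    using fine by (simp_all add: fine_tagged_def)
  obtain N e where se: "subdivision a b N e"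
    and points: "d ` {..n} \<subseteq> e ` {..N}" "d' ` {..m} \<subseteq> e ` {..N}"
    using common_refinement[OF ab sd] by blast
  obtain \<sigma> where \<sigma>: "\<And>j. j < N \<Longrightarrow> \<sigma> j < n \<and> d (\<sigma> j) \<le> e j \<and> e (Suc j) \<le> d (Suc (\<sigma> j))"
    and sum_\<sigma>: "\<And>x. (\<Sum>i<n. (G (d (Suc i)) - G (d i)) (x i)) = (\<Sum>j<N. (G (e (Suc j)) - G (e j)) (x (\<sigma> j)))"
    using subdivision_refinement[OF sd(1) se points(1)] by blast
  obtain \<sigma>' where \<sigma>': "\<And>j. j < N \<Longrightarrow> \<sigma>' j < m \<and> d' (\<sigma>' j) \<le> e j \<and> e (Suc j) \<le> d' (Suc (\<sigma>' j))"
    and sum_\<sigma>': "\<And>x. (\<Sum>i<m. (G (d' (Suc i)) - G (d' i)) (x i)) = (\<Sum>j<N. (G (e (Suc j)) - G (e j)) (x (\<sigma>' j)))"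
    using subdivision_refinement[OF sd(2) se points(2)] by blast
  define y where "y j = (1 / \<epsilon>) *\<^sub>R (f (\<xi> (\<sigma> j)) - f (\<xi>' (\<sigma>' j)))" for j
  have y: "norm (y j) \<le> 1" if j: "j < N" for j
  proof -
    have "e j < e (Suc j)"
      using se j by (simp add: subdivision_def)
    moreover have "d (\<sigma> j) \<le> \<xi> (\<sigma> j)" "\<xi> (\<sigma> j) \<le> d (Suc (\<sigma> j))" "d (Suc (\<sigma> j)) - d (\<sigma> j) < \<delta>"
      "d' (\<sigma>' j) \<le> \<xi>' (\<sigma>' j)" "\<xi>' (\<sigma>' j) \<le> d' (Suc (\<sigma>' j))" "d' (Suc (\<sigma>' j)) - d' (\<sigma>' j) < \<delta>"
      using fine \<sigma>[OF j] \<sigma>'[OF j] by (auto simp: fine_tagged_def)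
    moreover have "\<xi> (\<sigma> j) \<in> {a..b}" "\<xi>' (\<sigma>' j) \<in> {a..b}"
      using calculation(2-3,5-6) subdivision_cell[OF sd(1), of "\<sigma> j"] subdivision_cell[OF sd(2), of "\<sigma>' j"]
        \<sigma>[OF j] \<sigma>'[OF j] by auto
    ultimately have "norm (f (\<xi> (\<sigma> j)) - f (\<xi>' (\<sigma>' j))) \<le> \<epsilon>"
      using \<sigma>[OF j] \<sigma>'[OF j] by (intro f_close) auto
    then show ?thesis
      using \<epsilon> by (simp add: y_def)
  qed
  have "RS_sum G f n d \<xi> - RS_sum G f m d' \<xi>' = (\<Sum>j<N. (G (e (Suc j)) - G (e j)) (\<epsilon> *\<^sub>R y j))"
    unfolding RS_sum_def sum_\<sigma> sum_\<sigma>' using \<epsilon>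
    by (simp add: y_def sum_subtractf blinfun.diff_right)
  also have "\<dots> = \<epsilon> *\<^sub>R (\<Sum>j<N. (G (e (Suc j)) - G (e j)) (y j))"
    by (simp add: blinfun.scaleR_right scaleR_sum_right)
  finally show ?thesis
    using semivariation_boundD[OF sv se, of y] y \<epsilon> by (simp add: mult.commute mult_left_mono)
qed

lemma RS_sums_cauchy:
  fixes G :: "real \<Rightarrow> 'a::real_normed_vector \<Rightarrow>\<^sub>L 'b::real_normed_vector"
  assumes ab: "a < b" and sv: "semivariation_bound G a b M" and f: "continuous_on {a..b} f"
    and e: "0 < e"
  obtains \<delta> where "0 < \<delta>"
    and "\<And>n d \<xi> m d' \<xi>'. fine_tagged a b \<delta> n d \<xi> \<Longrightarrow> fine_tagged a b \<delta> m d' \<xi>' \<Longrightarrow>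
           norm (RS_sum G f n d \<xi> - RS_sum G f m d' \<xi>') < e"
proof -
  have M: "0 \<le> M"
    using semivariation_unit_bound[OF sv ab, of a 0] ab by simp
  define \<epsilon> where "\<epsilon> = e / (M + 1)"
  have \<epsilon>: "0 < \<epsilon>" "M * \<epsilon> < e"
    using e M by (auto simp: \<epsilon>_def field_simps)
  obtain \<eta> where \<eta>: "0 < \<eta>" and f_close: "\<And>s s'. s \<in> {a..b} \<Longrightarrow> s' \<in> {a..b} \<Longrightarrow> dist s' s < \<eta> \<Longrightarrow>
      dist (f s') (f s) < \<epsilon>"
    using compact_uniformly_continuous[OF f compact_Icc] \<epsilon>(1) unfolding uniformly_continuous_on_def
    by blast
  have close: "norm (f s - f s') \<le> \<epsilon>"
    if "s \<in> {a..b}" "s' \<in> {a..b}" "\<bar>s - s'\<bar> < 2 * (\<eta> / 2)" for s s'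
    using f_close[OF that(2,1)] that(3) by (simp add: dist_norm dist_real_def)
  show ?thesis
  proof (rule that[of "\<eta> / 2"])
    fix n d \<xi> m d' \<xi>' assume "fine_tagged a b (\<eta> / 2) n d \<xi>" "fine_tagged a b (\<eta> / 2) m d' \<xi>'"
    from RS_sums_close[where f=f and \<delta>="\<eta> / 2", OF ab sv \<epsilon>(1) close this]
    show "norm (RS_sum G f n d \<xi> - RS_sum G f m d' \<xi>') < e"
      using \<epsilon>(2) by linarith
  qed (use \<eta> in simp)
qed

lemma uniform_RS_sums_Cauchy:
  fixes G :: "real \<Rightarrow> 'a::real_normed_vector \<Rightarrow>\<^sub>L 'b::real_normed_vector"
  assumes ab: "a < b" and sv: "semivariation_bound G a b M" and f: "continuous_on {a..b} f"
  shows "Cauchy (uniform_RS_sum G f a b)"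
proof (rule CauchyI)
  fix e :: real assume e: "0 < e"
  obtain \<delta> where \<delta>: "0 < \<delta>" and close: "\<And>n d \<xi> m d' \<xi>'. fine_tagged a b \<delta> n d \<xi> \<Longrightarrow>
      fine_tagged a b \<delta> m d' \<xi>' \<Longrightarrow> norm (RS_sum G f n d \<xi> - RS_sum G f m d' \<xi>') < e"
    using RS_sums_cauchy[OF ab sv f e] by blast
  from eventually_uniform_fine[OF ab \<delta>]
  obtain K where "\<And>k. K \<le> k \<Longrightarrow>
      fine_tagged a b \<delta> (Suc k) (uniform_subdivision a b (Suc k)) (uniform_subdivision a b (Suc k))"
    unfolding eventually_sequentially by blast
  then show "\<exists>K. \<forall>m\<ge>K. \<forall>n\<ge>K. norm (uniform_RS_sum G f a b m - uniform_RS_sum G f a b n) < e"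
    by (auto simp: uniform_RS_sum_def intro: close)
qed

text \<open>A limit of the uniform sums is the Riemann--Stieltjes integral, since every fine sum is
  close to a fine uniform sum.\<close>
lemma RS_has_integral_uniform_limit:
  fixes G :: "real \<Rightarrow> 'a::banach \<Rightarrow>\<^sub>L 'a"
  assumes ab: "a < b" and sv: "semivariation_bound G a b M" and f: "continuous_on {a..b} f"
    and I: "uniform_RS_sum G f a b \<longlonglongrightarrow> I"
  shows "RS_has_integral G f a b I"
  unfolding RS_has_integral_iff
proof (intro allI impI)
  let ?u = "\<lambda>k. uniform_subdivision a b (Suc k)"
  fix e :: real assume "0 < e"
  then have e: "0 < e / 2"
    by simp
  then obtain \<delta> where \<delta>: "0 < \<delta>" and close: "\<And>n d \<xi> m d' \<xi>'. fine_tagged a b \<delta> n d \<xi> \<Longrightarrow>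
      fine_tagged a b \<delta> m d' \<xi>' \<Longrightarrow> norm (RS_sum G f n d \<xi> - RS_sum G f m d' \<xi>') < e / 2"
    using RS_sums_cauchy[OF ab sv f] by blast
  from eventually_happens[OF eventually_conj[OF eventually_uniform_fine[OF ab \<delta>] tendstoD[OF I e]]]
  obtain k where k: "fine_tagged a b \<delta> (Suc k) (?u k) (?u k)"
    "norm (RS_sum G f (Suc k) (?u k) (?u k) - I) < e / 2"
    by (auto simp: dist_norm uniform_RS_sum_def)
  have "norm (RS_sum G f n d \<xi> - I) < e / 2 + e / 2" if "fine_tagged a b \<delta> n d \<xi>" for n d \<xi>
    using norm_diff_triangle_less[OF close[OF that k(1)] k(2)] .
  with \<delta> show "\<exists>\<delta>>0. \<forall>n d \<xi>. fine_tagged a b \<delta> n d \<xi> \<longrightarrow> norm (RS_sum G f n d \<xi> - I) < e"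
    by auto
qed

theorem RS_integral_exists:
  fixes G :: "real \<Rightarrow> 'a::banach \<Rightarrow>\<^sub>L 'a"
  assumes ab: "a < b" and bsv: "bounded_semivariation G a b" and f: "continuous_on {a..b} f"
  shows "\<exists>I. RS_has_integral G f a b I"
proof -
  obtain M where sv: "semivariation_bound G a b M"
    using bsv by (auto simp: bounded_semivariation_iff)
  have "Cauchy (uniform_RS_sum G f a b)"
    by (rule uniform_RS_sums_Cauchy[OF ab sv f])
  then obtain I where "uniform_RS_sum G f a b \<longlonglongrightarrow> I"
    by (auto simp: Cauchy_convergent_iff convergent_def)
  then show ?thesis
    using RS_has_integral_uniform_limit[OF ab sv f] by blast
qed

text \<open>On a degenerate interval the only subdivision is empty.\<close>
lemma RS_has_integral_degenerate: "RS_has_integral G f a a 0"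
proof -
  have n0: "n = 0" if "subdivision a a n d" for n d
    using subdivision_less[OF that, of 0 n] that by (cases n) (auto simp: subdivision_def)
  show ?thesis
    unfolding RS_has_integral_def by (auto intro!: exI[of _ 1] dest!: n0)
qed

lemma continuous_on_family_apply:
  fixes P :: "'s::metric_space \<Rightarrow> 'a::real_normed_vector \<Rightarrow> 'b::real_normed_vector"
  assumes cont: "\<And>x. continuous_on T (\<lambda>u. P u x)"
    and diff: "\<And>u x y. u \<in> T \<Longrightarrow> P u x - P u y = P u (x - y)"
    and bound: "\<And>u x. u \<in> T \<Longrightarrow> norm (P u x) \<le> C * norm x"
    and \<phi>: "continuous_on T \<phi>"
  shows "continuous_on T (\<lambda>u. P u (\<phi> u))"
  unfolding continuous_on_def
proof (intro ballI)
  fix u0 assume u0: "u0 \<in> T"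
  let ?F = "at u0 within T"
  have "((\<lambda>u. P u (\<phi> u - \<phi> u0)) \<longlongrightarrow> 0) ?F"
  proof (rule Lim_null_comparison)
    show "\<forall>\<^sub>F u in ?F. norm (P u (\<phi> u - \<phi> u0)) \<le> C * norm (\<phi> u - \<phi> u0)"
      using bound by (auto simp: eventually_at_filter)
    have "((\<lambda>u. \<phi> u - \<phi> u0) \<longlongrightarrow> 0) ?F"
      using \<phi> u0 by (simp add: continuous_on_def LIM_zero)
    then show "((\<lambda>u. C * norm (\<phi> u - \<phi> u0)) \<longlongrightarrow> 0) ?F"
      by (intro tendsto_mult_right_zero tendsto_norm_zero)
  qed
  moreover have "((\<lambda>u. P u (\<phi> u0)) \<longlongrightarrow> P u0 (\<phi> u0)) ?F"
    using cont u0 by (simp add: continuous_on_def)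
  ultimately have "((\<lambda>u. P u (\<phi> u - \<phi> u0) + P u (\<phi> u0)) \<longlongrightarrow> 0 + P u0 (\<phi> u0)) ?F"
    by (rule tendsto_add)
  moreover have "\<forall>\<^sub>F u in ?F. P u (\<phi> u - \<phi> u0) + P u (\<phi> u0) = P u (\<phi> u)"
    using diff by (auto simp: eventually_at_filter diff_eq_eq)
  ultimately show "((\<lambda>u. P u (\<phi> u)) \<longlongrightarrow> P u0 (\<phi> u0)) ?F"
    by (simp add: tendsto_cong)
qed

section \<open>Resolvent families of bounded semivariation\<close>

locale resolvent_setting =
  fixes \<alpha> r :: real and D :: "'a::banach set" and A :: "'a \<Rightarrow> 'a" and S :: "real \<Rightarrow> 'a \<Rightarrow>\<^sub>L 'a"
  assumes \<alpha>_gt: "1 < \<alpha>" and \<alpha>_lt: "\<alpha> < 2"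
    and cdd: "closed_densely_defined D A"
    and resolvent: "resolvent_family \<alpha> D A S"
    and r: "0 < r"
    and bsv: "bounded_semivariation S 0 r"
begin

text \<open>\<open>P\<^sub>\<alpha>\<close> involves the kernel of order \<open>\<alpha> - 1 \<in> (0, 1)\<close>, which is singular at \<open>0\<close>.\<close>
lemma P_order: "0 < \<alpha> - 1" "\<alpha> - 1 \<le> 1"
  using \<alpha>_gt \<alpha>_lt by auto

lemma S_continuous: "continuous_on {0..T} (\<lambda>s. S s x)"
  using resolvent unfolding resolvent_family_def by (auto intro: continuous_on_subset)

text \<open>Bounded semivariation and \<open>S(0) = I\<close> give a uniform bound for \<open>S\<close> on \<open>[0, r]\<close>.\<close>
lemma S_bounded: "\<exists>M\<ge>0. \<forall>u\<in>{0..r}. \<forall>x. norm (S u x) \<le> M * norm x"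
proof -
  obtain M where sv: "semivariation_bound S 0 r M"
    using bsv by (auto simp: bounded_semivariation_iff)
  have S0: "S 0 = id_blinfun"
    using resolvent by (simp add: resolvent_family_def)
  have "norm (S u x) \<le> (M + 1) * norm x" if "u \<in> {0..r}" for u x
  proof -
    have "norm (S u x) \<le> norm x + norm ((S u - S 0) x)"
      using norm_triangle_sub[of "S u x" x] S0 by (simp add: blinfun.diff_left)
    also have "\<dots> \<le> norm x + M * norm x"
      using semivariation_operator_bound[OF sv r that] by simp
    finally show ?thesis
      by (simp add: algebra_simps)
  qed
  moreover have "0 \<le> M + 1"
    using semivariation_unit_bound[OF sv r, of 0 0] r by simp
  ultimately show ?thesis
    by blast
qed

lemma Pop_eq: "Pop \<alpha> S u x = frac_integral (\<alpha> - 1) (\<lambda>s. S s x) u"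
  by (simp add: Pop_def frac_integral_def)

lemma Pop_continuous: "continuous_on {0..r} (\<lambda>u. Pop \<alpha> S u x)"
  unfolding Pop_eq by (rule frac_integral_continuous[OF P_order S_continuous])

lemma Pop_diff: "u \<in> {0..r} \<Longrightarrow> Pop \<alpha> S u x - Pop \<alpha> S u y = Pop \<alpha> S u (x - y)"
  unfolding Pop_eq
  using frac_integral_diff[OF P_order(1), of u "\<lambda>s. S s x" "\<lambda>s. S s y"] S_continuous
  by (simp add: blinfun.diff_right)

lemma Pop_bounded: "\<exists>C\<ge>0. \<forall>u\<in>{0..r}. \<forall>x. norm (Pop \<alpha> S u x) \<le> C * norm x"
proof -
  obtain M where M: "0 \<le> M" "\<And>u x. u \<in> {0..r} \<Longrightarrow> norm (S u x) \<le> M * norm x"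
    using S_bounded by blast
  have "norm (Pop \<alpha> S u x) \<le> (M * gkern \<alpha> r) * norm x" if u: "u \<in> {0..r}" for u x
  proof -
    have "norm (Pop \<alpha> S u x) \<le> (M * norm x) * gkern \<alpha> u"
      using frac_integral_norm_le[OF P_order(1), of u "\<lambda>s. S s x" "M * norm x"] u M(2) S_continuous
      by (simp add: Pop_eq)
    also have "\<dots> \<le> (M * norm x) * gkern \<alpha> r"
      using u \<alpha>_gt M(1) by (intro mult_left_mono gkern_mono) auto
    finally show ?thesis
      by (simp add: mult_ac)
  qed
  moreover have "0 \<le> M * gkern \<alpha> r"
    using M(1) gkern_nonneg[of \<alpha> r] \<alpha>_gt by simp
  ultimately show ?thesis
    by blast
qed

text \<open>On \<open>D\<close>, the integrated resolvent identity \<open>A ((g\<^sub>\<alpha> * S) y) = S y - y\<close> is the defining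
  equation of the resolvent family, moved inside the integral by closedness of \<open>A\<close>.\<close>
lemma resolvent_integral_on_domain:
  assumes y: "y \<in> D" and \<tau>: "\<tau> \<in> {0..r}"
  shows "frac_integral \<alpha> (\<lambda>s. S s y) \<tau> \<in> D \<and> A (frac_integral \<alpha> (\<lambda>s. S s y) \<tau>) = S \<tau> y - y"
proof -
  have integrable: "(\<lambda>v. gkern \<alpha> (\<tau> - v) *\<^sub>R S v z) integrable_on {0..\<tau>}" for z
    using \<alpha>_gt by (intro integrable_continuous_real continuous_intros S_continuous
        continuous_on_compose2[OF gkern_continuous[of \<alpha> UNIV]]) auto
  have SD: "S v y \<in> D \<and> A (S v y) = S v (A y)" if "0 \<le> v" for v
    using resolvent y that unfolding resolvent_family_def by blast
  have D: "subspace D"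
    using cdd by (simp add: closed_densely_defined_def)
  have "frac_integral \<alpha> (\<lambda>s. S s y) \<tau> \<in> D \<and>
      A (frac_integral \<alpha> (\<lambda>s. S s y) \<tau>) = integral {0..\<tau>} (\<lambda>v. gkern \<alpha> (\<tau> - v) *\<^sub>R S v (A y))"
    unfolding frac_integral_def
  proof (rule closed_op_integral[OF cdd])
    show "((\<lambda>v. A (gkern \<alpha> (\<tau> - v) *\<^sub>R S v y)) has_integral
        integral {0..\<tau>} (\<lambda>v. gkern \<alpha> (\<tau> - v) *\<^sub>R S v (A y))) {0..\<tau>}"
    proof (rule has_integral_eq[OF _ integrable_integral[OF integrable]])
      fix v assume "v \<in> {0..\<tau>}"
      then show "gkern \<alpha> (\<tau> - v) *\<^sub>R S v (A y) = A (gkern \<alpha> (\<tau> - v) *\<^sub>R S v y)"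
        using SD[of v] cdd by (simp add: closed_densely_defined_def)
    qed
  qed (use integrable SD subspace_scale[OF D] in auto)
  moreover have "S \<tau> y = y + integral {0..\<tau>} (\<lambda>v. gkern \<alpha> (\<tau> - v) *\<^sub>R S v (A y))"
    using resolvent y \<tau> unfolding resolvent_family_def by auto
  ultimately show ?thesis
    by simp
qed

text \<open>\<open>x \<mapsto> (g\<^sub>\<alpha> * S) x\<close> is Lipschitz, since \<open>S\<close> is uniformly bounded on \<open>[0, r]\<close>.\<close>
lemma resolvent_integral_continuous:
  assumes \<tau>: "\<tau> \<in> {0..r}"
  shows "continuous_on UNIV (\<lambda>x. frac_integral \<alpha> (\<lambda>s. S s x) \<tau>)"
proof -
  obtain M where M: "0 \<le> M" "\<And>u x. u \<in> {0..r} \<Longrightarrow> norm (S u x) \<le> M * norm x"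
    using S_bounded by blast
  have "(M * gkern (\<alpha> + 1) \<tau>)-lipschitz_on UNIV (\<lambda>x. frac_integral \<alpha> (\<lambda>s. S s x) \<tau>)"
  proof (rule lipschitz_onI)
    fix x y :: 'a
    have "frac_integral \<alpha> (\<lambda>s. S s x) \<tau> - frac_integral \<alpha> (\<lambda>s. S s y) \<tau>
        = frac_integral \<alpha> (\<lambda>s. S s (x - y)) \<tau>"
      using frac_integral_diff[of \<alpha> \<tau> "\<lambda>s. S s x" "\<lambda>s. S s y"] \<alpha>_gt \<tau> S_continuous
      by (simp add: blinfun.diff_right)
    also have "norm \<dots> \<le> (M * norm (x - y)) * gkern (\<alpha> + 1) \<tau>"
      using \<alpha>_gt \<tau> M(2) by (intro frac_integral_norm_le S_continuous) auto
    finally show "dist (frac_integral \<alpha> (\<lambda>s. S s x) \<tau>) (frac_integral \<alpha> (\<lambda>s. S s y) \<tau>)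
        \<le> M * gkern (\<alpha> + 1) \<tau> * dist x y"
      by (simp add: dist_norm mult_ac)
  qed (use M(1) gkern_nonneg[of "\<alpha> + 1"] \<alpha>_gt in simp)
  then show ?thesis
    by (rule lipschitz_on_continuous_on)
qed

text \<open>By density the identity \<open>A ((g\<^sub>\<alpha> * S) x) = S x - x\<close> holds for every \<open>x \<in> X\<close>.\<close>
lemma resolvent_integral_domain:
  assumes \<tau>: "\<tau> \<in> {0..r}"
  shows "frac_integral \<alpha> (\<lambda>s. S s x) \<tau> \<in> D \<and> A (frac_integral \<alpha> (\<lambda>s. S s x) \<tau>) = S \<tau> x - x"
  using closed_op_extend_dense[OF cdd resolvent_integral_continuous[OF \<tau>], of "\<lambda>x. S \<tau> x - x"]
    resolvent_integral_on_domain[OF _ \<tau>]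
  by (simp add: continuous_on_diff continuous_on_id blinfun.continuous_on)

lemma Pop_integral:
  assumes "\<tau> \<in> {0..r}"
  shows "integral {0..\<tau>} (\<lambda>u. Pop \<alpha> S u x) = frac_integral \<alpha> (\<lambda>s. S s x) \<tau>"
  using frac_integral_integral[OF P_order, of \<tau> "\<lambda>s. S s x"] assms S_continuous
  by (simp add: Pop_eq[abs_def])

lemma Pop_segment_integral:
  assumes "0 \<le> a" "a \<le> c" "c \<le> t" "t \<le> r"
  shows "integral {a..c} (\<lambda>s. Pop \<alpha> S (t - s) x) \<in> D \<and>
         A (integral {a..c} (\<lambda>s. Pop \<alpha> S (t - s) x)) = S (t - a) x - S (t - c) x"
proof -
  let ?R = "\<lambda>\<tau>. frac_integral \<alpha> (\<lambda>s. S s x) \<tau>"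
  have "(\<lambda>u. Pop \<alpha> S u x) integrable_on {0..t - a}"
    using assms by (intro integrable_continuous_real continuous_on_subset[OF Pop_continuous]) auto
  then have "integral {0..t - a} (\<lambda>u. Pop \<alpha> S u x)
      = integral {0..t - c} (\<lambda>u. Pop \<alpha> S u x) + integral {t - c..t - a} (\<lambda>u. Pop \<alpha> S u x)"
    using assms by (intro Henstock_Kurzweil_Integration.integral_combine[symmetric]) auto
  then have "integral {a..c} (\<lambda>s. Pop \<alpha> S (t - s) x) = ?R (t - a) - ?R (t - c)"
    using assms integral_reflect_shift[where \<phi>="\<lambda>u. Pop \<alpha> S u x" and a=a and c=c and t=t]
    by (simp add: Pop_integral)
  moreover have "?R (t - a) \<in> D \<and> A (?R (t - a)) = S (t - a) x - x"
    "?R (t - c) \<in> D \<and> A (?R (t - c)) = S (t - c) x - x"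
    using resolvent_integral_domain[of "t - a" x] resolvent_integral_domain[of "t - c" x] assms
    by auto
  ultimately show ?thesis
    using closed_op_diff[OF cdd, of "?R (t - a)" "?R (t - c)"] by simp
qed

definition cell_sum :: "real \<Rightarrow> (real \<Rightarrow> 'a) \<Rightarrow> nat \<Rightarrow> (nat \<Rightarrow> real) \<Rightarrow> (nat \<Rightarrow> real) \<Rightarrow> 'a" where
  "cell_sum t f n d \<xi> = (\<Sum>i<n. integral {d i..d (Suc i)} (\<lambda>s. Pop \<alpha> S (t - s) (f (\<xi> i))))"

lemma cell_sum_domain:
  assumes t: "t \<le> r" and sd: "subdivision 0 t n d"
  shows "cell_sum t f n d \<xi> \<in> D \<and> A (cell_sum t f n d \<xi>) = - RS_sum (\<lambda>s. S (t - s)) f n d \<xi>"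
proof -
  have "integral {d i..d (Suc i)} (\<lambda>s. Pop \<alpha> S (t - s) (f (\<xi> i))) \<in> D \<and>
      A (integral {d i..d (Suc i)} (\<lambda>s. Pop \<alpha> S (t - s) (f (\<xi> i))))
        = S (t - d i) (f (\<xi> i)) - S (t - d (Suc i)) (f (\<xi> i))" if i: "i < n" for i
    using subdivision_range[OF sd, of i] subdivision_range[OF sd, of "Suc i"]
      subdivision_le[OF sd, of i "Suc i"] i t
    by (intro Pop_segment_integral) auto
  then have "cell_sum t f n d \<xi> \<in> D \<and>
      A (cell_sum t f n d \<xi>) = (\<Sum>i<n. S (t - d i) (f (\<xi> i)) - S (t - d (Suc i)) (f (\<xi> i)))"
    unfolding cell_sum_def using closed_op_sum[OF cdd, of "{..<n}"] by simp
  then show ?thesis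
    by (simp add: RS_sum_def blinfun.diff_left sum_negf[symmetric])
qed

lemma Pop_reflect_apply_continuous:
  assumes t: "0 \<le> t" "t \<le> r" and \<phi>: "continuous_on {0..t} \<phi>"
  shows "continuous_on {0..t} (\<lambda>s. Pop \<alpha> S (t - s) (\<phi> s))"
proof -
  obtain C where C: "\<And>u x. u \<in> {0..r} \<Longrightarrow> norm (Pop \<alpha> S u x) \<le> C * norm x"
    using Pop_bounded by blast
  have tr: "t - s \<in> {0..r}" if "s \<in> {0..t}" for s
    using that t by auto
  show ?thesis
  proof (rule continuous_on_family_apply[where P="\<lambda>s. Pop \<alpha> S (t - s)" and C=C, OF _ _ _ \<phi>])
    show "continuous_on {0..t} (\<lambda>s. Pop \<alpha> S (t - s) x)" for x
      using tr t by (intro continuous_on_compose2[OF Pop_continuous] continuous_intros) auto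
  qed (use tr Pop_diff C in auto)
qed

lemma cell_sum_error:
  assumes t: "0 \<le> t" "t \<le> r" and f: "continuous_on {0..t} f"
    and C: "0 \<le> C" "\<And>u x. u \<in> {0..r} \<Longrightarrow> norm (Pop \<alpha> S u x) \<le> C * norm x"
    and fine: "fine_tagged 0 t \<eta> n d \<xi>"
    and f_close: "\<And>s s'. s \<in> {0..t} \<Longrightarrow> s' \<in> {0..t} \<Longrightarrow> \<bar>s - s'\<bar> < \<eta> \<Longrightarrow> norm (f s - f s') \<le> \<epsilon>"
  shows "norm (Pconv \<alpha> S f t - cell_sum t f n d \<xi>) \<le> t * (C * \<epsilon>)"
proof -
  have sd: "subdivision 0 t n d"
    using fine by (simp add: fine_tagged_def)
  have tr: "t - s \<in> {0..r}" if "s \<in> {0..t}" for s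
    using that t by auto
  have cell: "norm (integral {d i..d (Suc i)} (\<lambda>s. Pop \<alpha> S (t - s) (f s))
      - integral {d i..d (Suc i)} (\<lambda>s. Pop \<alpha> S (t - s) (f (\<xi> i)))) \<le> (d (Suc i) - d i) * (C * \<epsilon>)"
    if i: "i < n" for i
  proof (rule integral_diff_norm_le)
    have sub: "{d i..d (Suc i)} \<subseteq> {0..t}"
      by (rule subdivision_cell[OF sd i])
    show "(\<lambda>s. Pop \<alpha> S (t - s) (f s)) integrable_on {d i..d (Suc i)}"
      "(\<lambda>s. Pop \<alpha> S (t - s) (f (\<xi> i))) integrable_on {d i..d (Suc i)}"
      by (intro integrable_continuous_real continuous_on_subset[OF Pop_reflect_apply_continuous[OF t] sub] f continuous_intros)+
    show "d i \<le> d (Suc i)"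
      using subdivision_le[OF sd, of i "Suc i"] i by simp
    fix s assume s: "s \<in> {d i..d (Suc i)}"
    have tag: "d i \<le> \<xi> i" "\<xi> i \<le> d (Suc i)" "d (Suc i) - d i < \<eta>"
      using fine i by (auto simp: fine_tagged_def)
    have s_range: "s \<in> {0..t}"
      using s sub by blast
    have "norm (Pop \<alpha> S (t - s) (f s) - Pop \<alpha> S (t - s) (f (\<xi> i)))
        = norm (Pop \<alpha> S (t - s) (f s - f (\<xi> i)))"
      using Pop_diff[OF tr[OF s_range]] by simp
    also have "\<dots> \<le> C * norm (f s - f (\<xi> i))"
      using C(2)[OF tr[OF s_range]] .
    also have "\<dots> \<le> C * \<epsilon>"
      using s sub tag C(1) by (intro mult_left_mono f_close) auto
    finally show "norm (Pop \<alpha> S (t - s) (f s) - Pop \<alpha> S (t - s) (f (\<xi> i))) \<le> C * \<epsilon>" .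
  qed
  have "Pconv \<alpha> S f t - cell_sum t f n d \<xi> = (\<Sum>i<n. integral {d i..d (Suc i)} (\<lambda>s. Pop \<alpha> S (t - s) (f s))
      - integral {d i..d (Suc i)} (\<lambda>s. Pop \<alpha> S (t - s) (f (\<xi> i))))"
    unfolding Pconv_def cell_sum_def sum_subtractf
    by (simp add: integral_subdivision[OF sd integrable_continuous_real[OF Pop_reflect_apply_continuous[OF t f]]])
  also have "norm \<dots> \<le> (\<Sum>i<n. (d (Suc i) - d i) * (C * \<epsilon>))"
    by (intro order_trans[OF norm_sum sum_mono] cell) simp
  also have "\<dots> = t * (C * \<epsilon>)"
    using subdivision_length_sum[OF sd] by (simp flip: sum_distrib_right)
  finally show ?thesis .
qed

lemma cell_sums_tendsto:
  assumes f: "continuous_on {0..t} f" and t: "0 < t" "t \<le> r"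
  shows "(\<lambda>k. cell_sum t f (Suc k) (uniform_subdivision 0 t (Suc k)) (uniform_subdivision 0 t (Suc k)))
           \<longlonglongrightarrow> Pconv \<alpha> S f t"
proof (rule tendstoI)
  fix e :: real assume e: "0 < e"
  obtain C where C: "0 \<le> C" "\<And>u x. u \<in> {0..r} \<Longrightarrow> norm (Pop \<alpha> S u x) \<le> C * norm x"
    using Pop_bounded by blast
  define \<epsilon> where "\<epsilon> = e / (t * C + 1)"
  have den: "0 < t * C + 1"
    using t C(1) by (simp add: add_nonneg_pos)
  have \<epsilon>: "0 < \<epsilon>" "t * (C * \<epsilon>) < e"
    using e den by (simp_all add: \<epsilon>_def field_simps)
  obtain \<eta> where \<eta>: "0 < \<eta>" and f_close: "\<And>s s'. s \<in> {0..t} \<Longrightarrow> s' \<in> {0..t} \<Longrightarrow> dist s' s < \<eta> \<Longrightarrow>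
      dist (f s') (f s) < \<epsilon>"
    using compact_uniformly_continuous[OF f compact_Icc] \<epsilon>(1) unfolding uniformly_continuous_on_def
    by blast
  have close: "norm (f s - f s') \<le> \<epsilon>" if "s \<in> {0..t}" "s' \<in> {0..t}" "\<bar>s - s'\<bar> < \<eta>" for s s'
    using f_close[OF that(2,1)] that(3) by (simp add: dist_norm dist_real_def)
  from eventually_uniform_fine[OF t(1) \<eta>]
  show "\<forall>\<^sub>F k in sequentially. dist (cell_sum t f (Suc k) (uniform_subdivision 0 t (Suc k))
      (uniform_subdivision 0 t (Suc k))) (Pconv \<alpha> S f t) < e"
  proof eventually_elim
    case (elim k)
    have "norm (Pconv \<alpha> S f t - cell_sum t f (Suc k) (uniform_subdivision 0 t (Suc k))
        (uniform_subdivision 0 t (Suc k))) \<le> t * (C * \<epsilon>)"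
      using t by (intro cell_sum_error[OF _ _ f C elim close]) auto
    with \<epsilon>(2) show ?case
      by (simp add: dist_norm norm_minus_commute)
  qed
qed

text \<open>The theorem for \<open>t > 0\<close>: the approximations lie in \<open>D\<close>, converge to \<open>(P\<^sub>\<alpha> * f)(t)\<close>, and
  their images under \<open>A\<close> converge to minus the Riemann--Stieltjes integral; \<open>A\<close> is closed.\<close>
lemma Pconv_domain:
  assumes f: "continuous_on {0..r} f" and t: "0 < t" "t \<le> r"
  shows "Pconv \<alpha> S f t \<in> D \<and> RS_has_integral (\<lambda>s. S (t - s)) f 0 t (- A (Pconv \<alpha> S f t))"
proof -
  let ?u = "\<lambda>k. uniform_subdivision 0 t (Suc k)"
  let ?Y = "\<lambda>k. cell_sum t f (Suc k) (?u k) (?u k)"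
  have ft: "continuous_on {0..t} f"
    using f t by (auto intro: continuous_on_subset)
  obtain M where "semivariation_bound S 0 r M"
    using bsv by (auto simp: bounded_semivariation_iff)
  then have "semivariation_bound (\<lambda>s. S (t - s)) 0 t M"
    using t by (rule semivariation_bound_reflect)
  then have "bounded_semivariation (\<lambda>s. S (t - s)) 0 t"
    by (auto simp: bounded_semivariation_iff)
  then obtain I where I: "RS_has_integral (\<lambda>s. S (t - s)) f 0 t I"
    using RS_integral_exists[OF t(1) _ ft] by blast
  have Y: "?Y k \<in> D \<and> A (?Y k) = - uniform_RS_sum (\<lambda>s. S (t - s)) f 0 t k" for k
    unfolding uniform_RS_sum_def using t by (intro cell_sum_domain uniform_subdivision) auto
  have "(\<lambda>k. A (?Y k)) \<longlonglongrightarrow> - I"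
    using tendsto_minus[OF RS_uniform_sums_tendsto[OF I t(1)]] Y by simp
  then have "Pconv \<alpha> S f t \<in> D \<and> A (Pconv \<alpha> S f t) = - I"
    using Y cell_sums_tendsto[OF ft t] by (intro closed_op_limit[OF cdd]) auto
  with I show ?thesis
    by simp
qed

end

text \<open>The main theorem: for \<open>t = 0\<close> both sides vanish, for \<open>t > 0\<close> it is \<open>Pconv_domain\<close>.\<close>
theorem lemma3p2:
  fixes \<alpha> r :: real and D :: "'a::banach set" and A :: "'a \<Rightarrow> 'a"
    and S :: "real \<Rightarrow> 'a \<Rightarrow>\<^sub>L 'a" and f :: "real \<Rightarrow> 'a"
  assumes "1 < \<alpha>" "\<alpha> < 2"
    and "closed_densely_defined D A"
    and "resolvent_family \<alpha> D A S"
    and "r > 0"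
    and "bounded_semivariation S 0 r"
    and "continuous_on {0..r} f"
  shows "\<forall>t\<in>{0..r}. Pconv \<alpha> S f t \<in> D \<and>
           RS_has_integral (\<lambda>s. S (t - s)) f 0 t (- A (Pconv \<alpha> S f t))"
proof
  interpret resolvent_setting \<alpha> r D A S
    using assms by unfold_locales
  fix t assume "t \<in> {0..r}"
  then consider "t = 0" | "0 < t" "t \<le> r"
    by fastforce
  then show "Pconv \<alpha> S f t \<in> D \<and> RS_has_integral (\<lambda>s. S (t - s)) f 0 t (- A (Pconv \<alpha> S f t))"
  proof cases
    case 1
    then show ?thesis
      using closed_op_zero[OF cdd] RS_has_integral_degenerate by (simp add: Pconv_def)
  next
    case 2
    then show ?thesis
      using Pconv_domain[OF assms(7)] by blast
  qed
qed

end
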